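(* There is a constant $C_3>0$ depending only on $n$ such that the following holds. Let $0<\tilde\epsilon<\tfrac12$ and let $h\in C^{2,1}(\mathbb{R}^n\times[0,\infty))$ be a solution of the Ricci DeTurck equation with $\|h\|_{L^\infty(\mathbb{R}^n\times[0,\infty))}<\tilde\epsilon$. Then for every $R>0$ $$\frac12\partial_t\int_{\mathbb{R}^n}\eta_R|h|^2\,dx\leq\Big(-\frac12+C_3\tilde\epsilon\Big)\int_{\mathbb{R}^n}\eta_R|\nabla h|^2\,dx+\frac{C_3}{R^2}\int_{B_{2R}\setminus B_R}|h|^2\,dx.$$
   Context: Let $\delta=g_{eucl}$ be the Euclidean metric on $\mathbb{R}^n$; norms, $\nabla$ and $\Delta$ are Euclidean, and $(\delta+h)^{ab}$ is the inverse matrix of $\delta_{ab}+h_{ab}$. The Ricci DeTurck equation for a time-dependent symmetric 2-tensor $h$ is $(\partial_t-\Delta)h_{ij}=Q_0[h]_{ij}+\nabla_a(Q_1[h]^a_{ij})$, with $Q_0[h]_{ij}=\tfrac12(\delta+h)^{ab}(\delta+h)^{pq}(\nabla_i h_{pa}\nabla_j h_{qb}+2\nabla_a h_{jp}\nabla_q h_{ib}-2\nabla_a h_{jp}\nabla_b h_{iq}-2\nabla_j h_{pa}\nabla_b h_{iq}-2\nabla_i h_{pa}\nabla_b h_{jq})-\nabla_a(\delta+h)^{ab}\nabla_b h_{ij}$ and $Q_1[h]^a_{ij}=((\delta+h)^{ab}-\delta^{ab})\nabla_b h_{ij}$. $\eta$ is a fixed cut-off function on $\mathbb{R}^n$ with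 $\eta,\nabla\sqrt\eta\in C^\infty_c(B_2(0))$, $0\leq\eta\leq1$, $\eta\equiv1$ on $B_1(0)$, $|\nabla\eta|\leq c$ for a universal $c$; $\eta_R(y)=\eta(y/R)$. Balls $B_R$ are centered at $0$. *)

theory Defs
  imports "HOL-Analysis.Analysis"
begin

definition pd :: "'n::finite \<Rightarrow> (real^'n \<Rightarrow> real) \<Rightarrow> real^'n \<Rightarrow> real" where
  "pd a f x = deriv (\<lambda>s. f (x + s *\<^sub>R axis a 1)) 0"

definition has_pd :: "'n::finite \<Rightarrow> (real^'n \<Rightarrow> real) \<Rightarrow> real^'n \<Rightarrow> bool" where
  "has_pd a f x \<longleftrightarrow> (\<lambda>s. f (x + s *\<^sub>R axis a 1)) differentiable (at 0)"

fun iter_pd :: "'n::finite list \<Rightarrow> (real^'n \<Rightarrow> real) \<Rightarrow> real^'n \<Rightarrow> real" where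
  "iter_pd [] f = f"
| "iter_pd (a # as) f = pd a (iter_pd as f)"

definition smooth :: "(real^'n::finite \<Rightarrow> real) \<Rightarrow> bool" where
  "smooth f \<longleftrightarrow> (\<forall>as x. iter_pd as f differentiable (at x))"

definition csupp :: "(real^'n::finite \<Rightarrow> real) \<Rightarrow> (real^'n) set" where
  "csupp f = closure {x. f x \<noteq> 0}"

definition cutoff :: "real \<Rightarrow> (real^'n::finite \<Rightarrow> real) \<Rightarrow> bool" where
  "cutoff c \<eta> \<longleftrightarrow>
     smooth \<eta> \<and> csupp \<eta> \<subseteq> ball 0 2 \<and>
     (\<forall>x. (\<lambda>y. sqrt (\<eta> y)) differentiable (at x)) \<and>
     (\<forall>a. smooth (pd a (\<lambda>y. sqrt (\<eta> y))) \<and> csupp (pd a (\<lambda>y. sqrt (\<eta> y))) \<subseteq> ball 0 2) \<and>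
     (\<forall>x. 0 \<le> \<eta> x \<and> \<eta> x \<le> 1) \<and>
     (\<forall>x\<in>ball 0 1. \<eta> x = 1) \<and>
     (\<forall>x. sqrt (\<Sum>a\<in>UNIV. (pd a \<eta> x)\<^sup>2) \<le> c)"

definition etaR :: "(real^'n::finite \<Rightarrow> real) \<Rightarrow> real \<Rightarrow> real^'n \<Rightarrow> real" where
  "etaR \<eta> R y = \<eta> ((1 / R) *\<^sub>R y)"

text \<open>Operators acting on a spatial slice H of the tensor field (H y $ i $ j = h_ij(y)).\<close>
definition Dh :: "(real^'n \<Rightarrow> real^'n^'n) \<Rightarrow> 'n::finite \<Rightarrow> 'n \<Rightarrow> 'n \<Rightarrow> real^'n \<Rightarrow> real" where
  "Dh H a i j y = pd a (\<lambda>z. H z $ i $ j) y"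

definition ginv :: "(real^'n \<Rightarrow> real^'n^'n) \<Rightarrow> real^'n \<Rightarrow> real^'n^'n::finite" where
  "ginv H y = matrix_inv (mat 1 + H y)"

definition kd :: "'n \<Rightarrow> 'n \<Rightarrow> real" where
  "kd a b = (if a = b then 1 else 0)"

definition Q0 :: "(real^'n \<Rightarrow> real^'n^'n) \<Rightarrow> 'n::finite \<Rightarrow> 'n \<Rightarrow> real^'n \<Rightarrow> real" where
  "Q0 H i j y =
     (1/2) * (\<Sum>a\<in>UNIV. \<Sum>b\<in>UNIV. \<Sum>p\<in>UNIV. \<Sum>q\<in>UNIV.
        ginv H y $ a $ b * ginv H y $ p $ q *
        ( Dh H i p a y * Dh H j q b y
        + 2 * Dh H a j p y * Dh H q i b y
        - 2 * Dh H a j p y * Dh H b i q y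
        - 2 * Dh H j p a y * Dh H b i q y
        - 2 * Dh H i p a y * Dh H b j q y))
     - (\<Sum>a\<in>UNIV. \<Sum>b\<in>UNIV. pd a (\<lambda>z. ginv H z $ a $ b) y * Dh H b i j y)"

definition divQ1 :: "(real^'n \<Rightarrow> real^'n^'n) \<Rightarrow> 'n::finite \<Rightarrow> 'n \<Rightarrow> real^'n \<Rightarrow> real" where
  "divQ1 H i j y =
     (\<Sum>a\<in>UNIV. pd a (\<lambda>z. \<Sum>b\<in>UNIV. (ginv H z $ a $ b - kd a b) * Dh H b i j z) y)"

definition lap :: "(real^'n \<Rightarrow> real^'n^'n) \<Rightarrow> 'n::finite \<Rightarrow> 'n \<Rightarrow> real^'n \<Rightarrow> real" where
  "lap H i j y = (\<Sum>a\<in>UNIV. pd a (\<lambda>z. Dh H a i j z) y)"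

definition C21 :: "(real^'n::finite \<Rightarrow> real \<Rightarrow> real^'n^'n) \<Rightarrow> bool" where
  "C21 h \<longleftrightarrow> (\<forall>i j.
     continuous_on (UNIV \<times> {0..}) (\<lambda>(x,t). h x t $ i $ j) \<and>
     (\<forall>t\<ge>0. \<forall>x a. has_pd a (\<lambda>y. h y t $ i $ j) x) \<and>
     (\<forall>t\<ge>0. \<forall>x a b. has_pd b (\<lambda>y. pd a (\<lambda>z. h z t $ i $ j) y) x) \<and>
     (\<forall>a. continuous_on (UNIV \<times> {0..}) (\<lambda>(x,t). pd a (\<lambda>z. h z t $ i $ j) x)) \<and>
     (\<forall>a b. continuous_on (UNIV \<times> {0..})
        (\<lambda>(x,t). pd b (\<lambda>y. pd a (\<lambda>z. h z t $ i $ j) y) x)) \<and>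
     (\<exists>ht. continuous_on (UNIV \<times> {0..}) (\<lambda>(x,t). ht x t) \<and>
        (\<forall>x. \<forall>t\<ge>0. ((\<lambda>s. h x s $ i $ j) has_real_derivative ht x t) (at t within {0..}))))"

definition symmetric_field :: "(real^'n::finite \<Rightarrow> real \<Rightarrow> real^'n^'n) \<Rightarrow> bool" where
  "symmetric_field h \<longleftrightarrow> (\<forall>x t i j. h x t $ i $ j = h x t $ j $ i)"

definition ricci_deturck :: "(real^'n::finite \<Rightarrow> real \<Rightarrow> real^'n^'n) \<Rightarrow> bool" where
  "ricci_deturck h \<longleftrightarrow> (\<forall>x. \<forall>t>0. \<forall>i j.
     deriv (\<lambda>s. h x s $ i $ j) t - lap (\<lambda>y. h y t) i j x
       = Q0 (\<lambda>y. h y t) i j x + divQ1 (\<lambda>y. h y t) i j x)"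

text \<open>|grad h|^2 = sum over a,i,j of (d_a h_ij)^2; |h|^2 is the Frobenius norm (= norm on real^'n^'n).\<close>
definition grad_sq :: "(real^'n::finite \<Rightarrow> real \<Rightarrow> real^'n^'n) \<Rightarrow> real \<Rightarrow> real^'n \<Rightarrow> real" where
  "grad_sq h t x = (\<Sum>a\<in>UNIV. \<Sum>i\<in>UNIV. \<Sum>j\<in>UNIV. (Dh (\<lambda>y. h y t) a i j x)\<^sup>2)"

end

theory Submission
  imports Defs
begin

(* Multiply the equation by etaR h_ij and integrate in space. The principal part is a divergence,
   Delta h_ij + div Q1_ij = d_a ((delta + h)^ab d_b h_ij), so integrating by parts moves d_a onto etaR h_ij.
   The main term etaR (delta + h)^ab d_a h_ij d_b h_ij is -etaR |grad h|^2 up to O(eps) etaR |grad h|^2,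
   and Q0 is quadratic in grad h with bounded coefficients, so h * Q0 contributes O(eps) etaR |grad h|^2.
   Since eta = (sqrt eta)^2, the cut-off derivative obeys |grad etaR| <= C sqrt(etaR) / R on the annulus
   B_2R - B_R and vanishes elsewhere, so by AM-GM the terms containing it are absorbed into
   1/2 etaR |grad h|^2 and C/R^2 |h|^2 on the annulus. All integrands are continuous with support in a
   fixed cube, which justifies both the integration by parts and differentiation under the integral. *)

section \<open>Partial derivatives along coordinate lines\<close>

definition has_partial :: "'n::finite \<Rightarrow> (real^'n \<Rightarrow> real) \<Rightarrow> (real^'n \<Rightarrow> real) \<Rightarrow> bool" where
  "has_partial a f f' \<longleftrightarrow> (\<forall>y. ((\<lambda>s. f (y + s *\<^sub>R axis a 1)) has_real_derivative f' y) (at 0))"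

lemma pd_eq_if_has_partial: "has_partial a f f' \<Longrightarrow> pd a f = f'"
  unfolding has_partial_def pd_def by (auto simp: DERIV_imp_deriv)

lemma has_partial_along_line:
  assumes "has_partial a f f'"
  shows "((\<lambda>s. f (y + s *\<^sub>R axis a 1)) has_real_derivative f' (y + s0 *\<^sub>R axis a 1)) (at s0)"
proof -
  have "((\<lambda>u. f ((y + s0 *\<^sub>R axis a 1) + u *\<^sub>R axis a 1)) has_real_derivative f' (y + s0 *\<^sub>R axis a 1)) (at 0)"
    using assms unfolding has_partial_def by blast
  then have "((\<lambda>u. (\<lambda>s. f (y + s *\<^sub>R axis a 1)) (u + s0)) has_real_derivative f' (y + s0 *\<^sub>R axis a 1)) (at 0)"
    by (simp add: algebra_simps scaleR_add_left)
  then show ?thesis using DERIV_shift[of "\<lambda>s. f (y + s *\<^sub>R axis a 1)" _ 0 s0] by simp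
qed

lemma has_partial_diff:
  "has_partial a f f' \<Longrightarrow> has_partial a g g' \<Longrightarrow> has_partial a (\<lambda>y. f y - g y) (\<lambda>y. f' y - g' y)"
  unfolding has_partial_def by (auto intro!: derivative_eq_intros)

lemma has_partial_mult:
  "has_partial a f f' \<Longrightarrow> has_partial a g g' \<Longrightarrow> has_partial a (\<lambda>y. f y * g y) (\<lambda>y. f' y * g y + f y * g' y)"
  unfolding has_partial_def by (auto intro!: derivative_eq_intros)

lemma has_partial_sum:
  "(\<And>i. i \<in> S \<Longrightarrow> has_partial a (f i) (f' i)) \<Longrightarrow>
   has_partial a (\<lambda>y. \<Sum>i\<in>S. f i y) (\<lambda>y. \<Sum>i\<in>S. f' i y)"
  unfolding has_partial_def by (auto intro!: DERIV_sum)

lemma has_partial_cong: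
  "has_partial a f f' \<Longrightarrow> (\<And>y. f y = g y) \<Longrightarrow> (\<And>y. f' y = g' y) \<Longrightarrow> has_partial a g g'"
  by (metis ext)

lemma has_partial_pd: "(\<And>x. has_pd a f x) \<Longrightarrow> has_partial a f (pd a f)"
  unfolding has_partial_def has_pd_def pd_def
  by (simp add: DERIV_deriv_iff_real_differentiable)

lemma differentiable_imp_has_partial:
  fixes f :: "real^'n::finite \<Rightarrow> real"
  assumes "\<And>x. f differentiable (at x)"
  shows "has_partial a f (pd a f)"
proof (rule has_partial_pd)
  fix x :: "real^'n"
  have "(\<lambda>s::real. x + s *\<^sub>R axis a 1) differentiable (at 0)"
    by (auto intro!: derivative_intros)
  then have "(f \<circ> (\<lambda>s::real. x + s *\<^sub>R axis a 1)) differentiable (at 0)"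
    using assms by (intro differentiable_chain_at) auto
  then show "has_pd a f x" unfolding has_pd_def o_def by simp
qed

section \<open>Matrices close to the identity\<close>

lemma matrix_diff_ldistrib: "(A::real^'n^'m) ** (B - C) = A ** B - A ** (C::real^'k^'n)"
  by (simp add: vec_eq_iff matrix_matrix_mult_def sum_subtractf algebra_simps)

lemma matrix_diff_rdistrib: "((B::real^'n^'m) - C) ** (A::real^'k^'n) = B ** A - C ** A"
  by (simp add: vec_eq_iff matrix_matrix_mult_def sum_subtractf algebra_simps)

lemma matrix_add_rdistrib: "((B::real^'n^'m) + C) ** (A::real^'k^'n) = B ** A + C ** A"
  by (simp add: vec_eq_iff matrix_matrix_mult_def sum.distrib algebra_simps)

lemma power2_norm_vec: "(norm (x::'a::real_inner^'n))\<^sup>2 = (\<Sum>i\<in>UNIV. (norm (x $ i))\<^sup>2)"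
  by (simp add: power2_norm_eq_inner inner_vec_def)

lemma power2_norm_matrix: "(norm (x::real^'n^'m))\<^sup>2 = (\<Sum>i\<in>UNIV. \<Sum>j\<in>UNIV. (x $ i $ j)\<^sup>2)"
  by (simp add: power2_norm_vec)

lemma abs_matrix_entry_le_norm: "\<bar>(A::real^'n^'m) $ i $ j\<bar> \<le> norm A"
  using component_le_norm_cart Finite_Cartesian_Product.norm_nth_le order_trans by blast

lemma norm_matrix_vector_mult_le: "norm ((A::real^'n^'m) *v v) \<le> norm A * norm v"
proof -
  have "(norm (A *v v))\<^sup>2 = (\<Sum>i\<in>UNIV. ((A $ i) \<bullet> v)\<^sup>2)"
    by (simp add: power2_norm_vec matrix_vector_mul_component)
  also have "\<dots> \<le> (\<Sum>i\<in>UNIV. (norm (A $ i))\<^sup>2 * (norm v)\<^sup>2)"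
  proof (rule sum_mono)
    fix i
    have "\<bar>A $ i \<bullet> v\<bar> \<le> norm (A $ i) * norm v" by (rule Cauchy_Schwarz_ineq2)
    then show "(A $ i \<bullet> v)\<^sup>2 \<le> (norm (A $ i))\<^sup>2 * (norm v)\<^sup>2"
      by (metis abs_ge_zero power2_abs power_mono power_mult_distrib)
  qed
  also have "\<dots> = (norm A * norm v)\<^sup>2"
    by (simp add: power2_norm_vec power_mult_distrib sum_distrib_right)
  finally show ?thesis
    by (meson mult_nonneg_nonneg norm_ge_zero power2_le_imp_le)
qed

abbreviation inv_id_plus :: "real^'n^'n \<Rightarrow> real^'n^'n::finite" where
  "inv_id_plus A \<equiv> matrix_inv (mat 1 + A)"

(* |A x| <= |x|/2 makes I + A injective, and w = (I + A)^-1 e_j = e_j - A w has norm at most 2. *)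
lemma inv_id_plus:
  fixes A :: "real^'n^'n"
  assumes "norm A \<le> 1/2"
  shows "(mat 1 + A) ** inv_id_plus A = mat 1"
    and "inv_id_plus A ** (mat 1 + A) = mat 1"
    and "\<bar>inv_id_plus A $ i $ j\<bar> \<le> 2"
proof -
  let ?M = "mat 1 + A"
  have small: "norm (A *v x) \<le> 1/2 * norm x" for x
    using norm_matrix_vector_mult_le[of A x] assms by (smt (verit) mult_right_mono norm_ge_zero)
  have "x = 0" if "?M *v x = 0" for x
  proof -
    have "x = - (A *v x)"
      using that by (simp add: matrix_vector_mult_add_rdistrib eq_neg_iff_add_eq_0)
    then have "norm x \<le> 1/2 * norm x"
      using small[of x] by (metis norm_minus_cancel)
    then show "x = 0" by simp
  qed
  then have "invertible ?M"
    using matrix_left_invertible_ker invertible_left_inverse by blast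
  then have inv: "?M ** inv_id_plus A = mat 1 \<and> inv_id_plus A ** ?M = mat 1"
    unfolding invertible_def matrix_inv_def by (rule someI_ex)
  then show "?M ** inv_id_plus A = mat 1" "inv_id_plus A ** ?M = mat 1" by auto
  let ?w = "inv_id_plus A *v axis j 1"
  have "?M *v ?w = axis j 1"
    using inv by (simp add: matrix_vector_mul_assoc)
  then have "?w + A *v ?w = axis j 1"
    by (simp add: matrix_vector_mult_add_rdistrib)
  then have "norm ?w \<le> norm (axis j (1::real)) + norm (A *v ?w)"
    by (metis add_diff_cancel_right' norm_triangle_ineq4)
  then have "norm ?w \<le> 2"
    using small[of ?w] by simp
  moreover have "?w $ i = inv_id_plus A $ i $ j"
    by (simp add: matrix_vector_mult_def axis_def if_distrib if_distribR cong: if_cong)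
  ultimately show "\<bar>inv_id_plus A $ i $ j\<bar> \<le> 2"
    by (metis component_le_norm_cart order_trans)
qed

lemma inv_id_plus_diff:
  fixes A C :: "real^'n^'n"
  assumes "norm A \<le> 1/2" "norm C \<le> 1/2"
  shows "inv_id_plus A $ p $ q - inv_id_plus C $ p $ q =
     (\<Sum>u\<in>UNIV. \<Sum>r\<in>UNIV. inv_id_plus A $ p $ r * (C $ r $ u - A $ r $ u) * inv_id_plus C $ u $ q)"
proof -
  have "inv_id_plus A ** (C - A) ** inv_id_plus C = inv_id_plus A - inv_id_plus C"
  proof -
    have "C - A = (mat 1 + C) - (mat 1 + A)" by simp
    then have "inv_id_plus A ** (C - A) ** inv_id_plus C
        = (inv_id_plus A ** (mat 1 + C) - inv_id_plus A ** (mat 1 + A)) ** inv_id_plus C"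
      by (simp only: matrix_diff_ldistrib)
    also have "\<dots> = inv_id_plus A ** ((mat 1 + C) ** inv_id_plus C) - mat 1 ** inv_id_plus C"
      using inv_id_plus(2)[OF assms(1)] by (simp add: matrix_diff_rdistrib matrix_mul_assoc)
    also have "\<dots> = inv_id_plus A - inv_id_plus C"
      using inv_id_plus(1)[OF assms(2)] by simp
    finally show ?thesis .
  qed
  then have "inv_id_plus A $ p $ q - inv_id_plus C $ p $ q = (inv_id_plus A ** (C - A) ** inv_id_plus C) $ p $ q"
    by simp
  then show ?thesis
    by (simp add: matrix_matrix_mult_def sum_distrib_right)
qed

lemma abs_inv_id_plus_diff_le:
  fixes A C :: "real^'n^'n"
  assumes "norm A \<le> 1/2" "norm C \<le> 1/2"
  shows "\<bar>inv_id_plus A $ p $ q - inv_id_plus C $ p $ q\<bar> \<le> (\<Sum>u\<in>UNIV. \<Sum>r\<in>UNIV. 4 * \<bar>C $ r $ u - A $ r $ u\<bar>)"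
proof -
  have "\<bar>inv_id_plus A $ p $ q - inv_id_plus C $ p $ q\<bar> \<le>
     (\<Sum>u\<in>UNIV. \<Sum>r\<in>UNIV. \<bar>inv_id_plus A $ p $ r * (C $ r $ u - A $ r $ u) * inv_id_plus C $ u $ q\<bar>)"
    unfolding inv_id_plus_diff[OF assms]
    by (rule order_trans[OF sum_abs sum_mono]) (rule sum_abs)
  also have "\<dots> \<le> (\<Sum>u\<in>UNIV. \<Sum>r\<in>UNIV. 2 * 2 * \<bar>C $ r $ u - A $ r $ u\<bar>)"
  proof (intro sum_mono)
    fix u r
    have "\<bar>inv_id_plus A $ p $ r * (C $ r $ u - A $ r $ u) * inv_id_plus C $ u $ q\<bar>
      = \<bar>inv_id_plus A $ p $ r\<bar> * \<bar>inv_id_plus C $ u $ q\<bar> * \<bar>C $ r $ u - A $ r $ u\<bar>"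
      by (simp add: abs_mult)
    also have "\<dots> \<le> 2 * 2 * \<bar>C $ r $ u - A $ r $ u\<bar>"
      using inv_id_plus(3) assms by (intro mult_right_mono mult_mono) auto
    finally show "\<bar>inv_id_plus A $ p $ r * (C $ r $ u - A $ r $ u) * inv_id_plus C $ u $ q\<bar>
      \<le> 2 * 2 * \<bar>C $ r $ u - A $ r $ u\<bar>" .
  qed
  finally show ?thesis by simp
qed

lemma tendsto_inv_id_plus:
  fixes Af :: "'a \<Rightarrow> real^'n^'n" and A0 :: "real^'n^'n"
  assumes small: "\<And>z. norm (Af z) \<le> 1/2" "norm A0 \<le> 1/2"
    and lim: "\<And>i j. ((\<lambda>z. Af z $ i $ j) \<longlongrightarrow> A0 $ i $ j) F"
  shows "((\<lambda>z. inv_id_plus (Af z) $ p $ q) \<longlongrightarrow> inv_id_plus A0 $ p $ q) F"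
proof -
  have bound: "\<forall>\<^sub>F z in F. norm (inv_id_plus (Af z) $ p $ q - inv_id_plus A0 $ p $ q)
      \<le> (\<Sum>u\<in>UNIV. \<Sum>r\<in>UNIV. 4 * \<bar>A0 $ r $ u - Af z $ r $ u\<bar>)"
    using abs_inv_id_plus_diff_le[OF small(1) small(2)] by (intro always_eventually) simp
  have "((\<lambda>z. \<Sum>u\<in>UNIV. \<Sum>r\<in>UNIV. 4 * \<bar>A0 $ r $ u - Af z $ r $ u\<bar>) \<longlongrightarrow>
        (\<Sum>u\<in>(UNIV::'n set). \<Sum>r\<in>(UNIV::'n set). 4 * \<bar>A0 $ r $ u - A0 $ r $ u\<bar>)) F"
    by (intro tendsto_intros lim)
  then have "((\<lambda>z. \<Sum>u\<in>UNIV. \<Sum>r\<in>UNIV. 4 * \<bar>A0 $ r $ u - Af z $ r $ u\<bar>) \<longlongrightarrow> 0) F"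
    by simp
  with bound have "((\<lambda>z. inv_id_plus (Af z) $ p $ q - inv_id_plus A0 $ p $ q) \<longlongrightarrow> 0) F"
    by (rule Lim_null_comparison)
  then show ?thesis by (simp add: LIM_zero_iff)
qed

lemma has_real_derivative_inv_id_plus:
  fixes Af :: "real \<Rightarrow> real^'n^'n" and D :: "real^'n^'n"
  assumes small: "\<And>z. norm (Af z) \<le> 1/2"
    and der: "\<And>i j. ((\<lambda>s. Af s $ i $ j) has_real_derivative D $ i $ j) (at s0)"
  shows "((\<lambda>s. inv_id_plus (Af s) $ p $ q) has_real_derivative
     - (\<Sum>u\<in>UNIV. \<Sum>r\<in>UNIV. inv_id_plus (Af s0) $ p $ r * D $ r $ u * inv_id_plus (Af s0) $ u $ q)) (at s0)"
proof -
  let ?N = "\<lambda>s. inv_id_plus (Af s)"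
  have "((\<lambda>h. Af (s0 + h) $ i $ j) \<longlongrightarrow> Af s0 $ i $ j) (at 0)" for i j
    using DERIV_isCont[OF der[of i j]] unfolding isCont_def by (rule LIM_offset_zero)
  then have N_lim: "((\<lambda>h. ?N (s0 + h) $ p $ r) \<longlongrightarrow> ?N s0 $ p $ r) (at 0)" for r
    by (intro tendsto_inv_id_plus small)
  have quotient_lim: "((\<lambda>h. (Af s0 $ r $ u - Af (s0 + h) $ r $ u) / h) \<longlongrightarrow> - D $ r $ u) (at 0)" for r u
    using tendsto_minus[OF der[of r u, unfolded DERIV_def]] by (simp add: minus_divide_left)
  have quotient_eq: "(?N (s0 + h) $ p $ q - ?N s0 $ p $ q) / h =
     (\<Sum>u\<in>UNIV. \<Sum>r\<in>UNIV. ?N (s0 + h) $ p $ r * ((Af s0 $ r $ u - Af (s0 + h) $ r $ u) / h) * ?N s0 $ u $ q)"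
    for h
    using inv_id_plus_diff[where A="Af (s0 + h)" and C="Af s0" and p=p and q=q] small
    by (simp add: sum_divide_distrib)
  have "((\<lambda>h. \<Sum>u\<in>UNIV. \<Sum>r\<in>UNIV.
       ?N (s0 + h) $ p $ r * ((Af s0 $ r $ u - Af (s0 + h) $ r $ u) / h) * ?N s0 $ u $ q)
     \<longlongrightarrow> (\<Sum>u\<in>UNIV. \<Sum>r\<in>UNIV. ?N s0 $ p $ r * (- D $ r $ u) * ?N s0 $ u $ q)) (at 0)"
    by (intro tendsto_intros N_lim quotient_lim)
  then show ?thesis
    unfolding DERIV_def quotient_eq[symmetric] by (simp add: sum_negf)
qed

section \<open>Integration over cubes\<close>

definition cube :: "real \<Rightarrow> (real^'n::finite) set" where
  "cube k = cbox (\<chi> i. - k) (\<chi> i. k)"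

lemma mem_shifted_cube:
  fixes y c :: "real^'n::finite"
  assumes "norm (y - c) \<le> k"
  shows "y \<in> cbox ((\<chi> i. - k) + c) ((\<chi> i. k) + c)"
proof -
  have "c $ i - k \<le> y $ i \<and> y $ i \<le> k + c $ i" for i
    using component_le_norm_cart[of "y - c" i] assms by (simp add: abs_le_iff)
  then show ?thesis
    unfolding mem_box_cart by simp
qed

lemma mem_cube: "norm (y::real^'n::finite) \<le> k \<Longrightarrow> y \<in> cube k"
  using mem_shifted_cube[of y 0 k] by (simp add: cube_def)

lemma integral_eq_integral_UNIV:
  fixes F :: "real^'n::finite \<Rightarrow> real"
  assumes "\<And>x. x \<notin> S \<Longrightarrow> F x = 0"
  shows "integral S F = integral UNIV F"
proof -
  have "(\<lambda>x. if x \<in> S then F x else 0) = F" using assms by auto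
  then show ?thesis using integral_restrict_UNIV[of S F] by simp
qed

lemma integrable_on_cube: "continuous_on UNIV (f::real^'n::finite \<Rightarrow> real) \<Longrightarrow> f integrable_on cube k"
  unfolding cube_def using integrable_continuous continuous_on_subset by blast

lemma integrable_on_subset_cube:
  fixes f :: "real^'n::finite \<Rightarrow> real"
  assumes "continuous_on UNIV f" "A \<subseteq> cube k" "A \<in> sets lebesgue"
  shows "f integrable_on A"
proof -
  have "f absolutely_integrable_on cube k" unfolding cube_def
    by (rule absolutely_integrable_continuous) (use assms continuous_on_subset in blast)
  then show ?thesis
    using set_integrable_subset assms absolutely_integrable_on_def by blast
qed

lemma integral_cube_shift:
  fixes F :: "real^'n::finite \<Rightarrow> real"
  assumes cF: "continuous_on UNIV F" and supp: "\<And>y. \<rho> \<le> norm y \<Longrightarrow> F y = 0" and k: "\<rho> + norm c \<le> k"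
  shows "integral (cube k) (\<lambda>x. F (x + c)) = integral UNIV F"
proof -
  let ?K = "cbox ((\<chi> i. - k) + c) ((\<chi> i. k) + c)"
  have "(F has_integral integral ?K F) ?K"
    using cF continuous_on_subset integrable_continuous integrable_integral by blast
  then have "((F \<circ> (+) c) has_integral integral ?K F) (cube k)"
    unfolding cube_def by (simp add: has_integral_shift_cbox_iff)
  moreover have "integral ?K F = integral UNIV F"
  proof (rule integral_eq_integral_UNIV)
    fix x assume "x \<notin> ?K"
    then have "\<not> norm (x - c) \<le> k" using mem_shifted_cube by blast
    moreover have "norm (x - c) \<le> norm x + norm c" by (rule norm_triangle_ineq4)
    ultimately show "F x = 0" using supp k by force
  qed
  ultimately show ?thesis
    by (simp add: o_def add.commute integral_unique)
qed

(* The integral of F(. + s e_a) over the cube is constant for |s| < 1, and the Leibniz rule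
   identifies its derivative at s = 0 with the integral of F'. *)
lemma integral_partial_eq_0:
  fixes F F' :: "real^'n::finite \<Rightarrow> real"
  assumes d: "has_partial a F F'" and cF: "continuous_on UNIV F" and cF': "continuous_on UNIV F'"
    and supp: "\<And>y. \<rho> \<le> norm y \<Longrightarrow> F y = 0" and k: "\<rho> + 1 \<le> k"
  shows "integral (cube k) F' = 0"
proof -
  define e :: "real^'n" where "e = axis a 1"
  define \<Phi> where "\<Phi> s = integral (cube k) (\<lambda>x. F (x + s *\<^sub>R e))" for s
  have "\<rho> + norm (s *\<^sub>R e) \<le> k" if "\<bar>s\<bar> \<le> 1" for s
    using that k by (simp add: e_def)
  then have "\<Phi> s = integral UNIV F" if "\<bar>s\<bar> \<le> 1" for s
    unfolding \<Phi>_def using that by (intro integral_cube_shift[OF cF supp]) simp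
  then have const: "\<forall>s. \<bar>0 - s\<bar> < 1 \<longrightarrow> \<Phi> 0 = \<Phi> s"
    by simp
  have U: "0 \<in> ball (0::real) 1" "convex (ball (0::real) 1)" by auto
  have "(\<Phi> has_field_derivative integral (cube k) (\<lambda>x. F' (x + 0 *\<^sub>R e))) (at 0 within ball 0 1)"
    unfolding \<Phi>_def cube_def
  proof (rule leibniz_rule_field_derivative[OF _ _ _ U])
    fix s x
    show "((\<lambda>s. F (x + s *\<^sub>R e)) has_field_derivative F' (x + s *\<^sub>R e)) (at s within ball 0 1)"
      using has_partial_along_line[OF d, of x s] unfolding e_def by (rule has_field_derivative_at_within)
  next
    fix s :: real
    have "continuous_on UNIV (\<lambda>x. F (x + s *\<^sub>R e))"
      by (intro continuous_on_compose2[OF cF] continuous_intros) auto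
    then show "(\<lambda>x. F (x + s *\<^sub>R e)) integrable_on cbox (\<chi> i. - k) (\<chi> i. k)"
      using integrable_continuous continuous_on_subset by blast
  next
    have "continuous_on UNIV (\<lambda>p::real \<times> (real^'n). F' (snd p + fst p *\<^sub>R e))"
      by (intro continuous_on_compose2[OF cF'] continuous_intros) auto
    then show "continuous_on (ball 0 1 \<times> cbox (\<chi> i. - k) (\<chi> i. k)) (\<lambda>(s, x). F' (x + s *\<^sub>R e))"
      unfolding split_beta using continuous_on_subset by blast
  qed
  then have "(\<Phi> has_field_derivative integral (cube k) F') (at 0)"
    using at_within_open[of 0 "ball (0::real) 1"] by simp
  then show ?thesis using DERIV_local_const[of \<Phi> _ 0 1] const by auto
qed

section \<open>The cut-off function\<close>

lemma vanishes_outside_csupp: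
  fixes f :: "real^'n::finite \<Rightarrow> real"
  assumes "csupp f \<subseteq> ball 0 r" "r \<le> norm z"
  shows "f z = 0"
proof (rule ccontr)
  assume "f z \<noteq> 0"
  then have "z \<in> closure {x. f x \<noteq> 0}"
    by (intro closure_subset[THEN subsetD]) simp
  then show False
    using assms unfolding csupp_def by auto
qed

lemma differentiable_imp_continuous_on_UNIV: "(\<And>x. f differentiable (at x)) \<Longrightarrow> continuous_on UNIV f"
  by (simp add: continuous_at_imp_continuous_on differentiable_imp_continuous_within)

lemma bounded_if_continuous_vanishing_outside_ball:
  fixes f :: "real^'n::finite \<Rightarrow> real"
  assumes "continuous_on UNIV f" "\<And>z. r \<le> norm z \<Longrightarrow> f z = 0"
  shows "\<exists>B\<ge>0. \<forall>z. \<bar>f z\<bar> \<le> B"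
proof -
  have "compact (f ` cball 0 r)"
    using assms(1) by (intro compact_continuous_image) (auto intro: continuous_on_subset)
  then have "bounded (f ` cball 0 r)" by (rule compact_imp_bounded)
  then obtain B where B: "\<forall>x\<in>f ` cball 0 r. norm x \<le> B"
    unfolding bounded_iff by blast
  have "\<bar>f z\<bar> \<le> \<bar>B\<bar>" for z
  proof (cases "norm z \<le> r")
    case True
    then have "norm (f z) \<le> B" using B by simp
    then show ?thesis by simp
  next
    case False
    then show ?thesis using assms(2)[of z] by simp
  qed
  then show ?thesis by (intro exI[of _ "\<bar>B\<bar>"]) auto
qed

locale cutoff_function =
  fixes c :: real and \<eta> :: "real^'n::finite \<Rightarrow> real"
  assumes cutoff: "cutoff c \<eta>"
begin

definition "\<phi> y = sqrt (\<eta> y)"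

lemma eta_differentiable: "\<eta> differentiable (at x)"
proof -
  have "iter_pd [] \<eta> differentiable (at x)" using cutoff unfolding cutoff_def smooth_def by blast
  then show ?thesis by simp
qed

lemma continuous_on_eta: "continuous_on UNIV \<eta>"
  using eta_differentiable differentiable_imp_continuous_on_UNIV by blast

lemma has_partial_eta: "has_partial a \<eta> (pd a \<eta>)"
  using eta_differentiable differentiable_imp_has_partial by blast

lemma continuous_on_pd_eta: "continuous_on UNIV (pd a \<eta>)"
proof (rule differentiable_imp_continuous_on_UNIV)
  fix x
  have "iter_pd [a] \<eta> differentiable (at x)" using cutoff unfolding cutoff_def smooth_def by blast
  then show "pd a \<eta> differentiable (at x)" by simp
qed

lemma eta_range: "0 \<le> \<eta> x" "\<eta> x \<le> 1"
  using cutoff unfolding cutoff_def by auto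

lemma eta_eq_0: "2 \<le> norm z \<Longrightarrow> \<eta> z = 0"
  using cutoff vanishes_outside_csupp unfolding cutoff_def by blast

lemma has_partial_phi: "has_partial a \<phi> (pd a \<phi>)"
proof (rule differentiable_imp_has_partial)
  show "\<phi> differentiable (at x)" for x
    using cutoff unfolding cutoff_def \<phi>_def[abs_def] by blast
qed

lemma continuous_on_pd_phi: "continuous_on UNIV (pd a \<phi>)"
proof (rule differentiable_imp_continuous_on_UNIV)
  fix x
  have "smooth (pd a (\<lambda>y. sqrt (\<eta> y)))" using cutoff unfolding cutoff_def by blast
  then have "iter_pd [] (pd a (\<lambda>y. sqrt (\<eta> y))) differentiable (at x)" unfolding smooth_def by blast
  then show "pd a \<phi> differentiable (at x)" by (simp add: \<phi>_def[abs_def])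
qed

lemma pd_phi_eq_0: "2 \<le> norm z \<Longrightarrow> pd a \<phi> z = 0"
  using cutoff vanishes_outside_csupp unfolding cutoff_def \<phi>_def[abs_def] by blast

lemma pd_phi_bounded: "\<exists>M\<ge>0. \<forall>a z. \<bar>pd a \<phi> z\<bar> \<le> M"
proof -
  obtain B where B: "\<And>a. B a \<ge> 0" "\<And>a z. \<bar>pd a \<phi> z\<bar> \<le> B a"
    using bounded_if_continuous_vanishing_outside_ball[OF continuous_on_pd_phi pd_phi_eq_0] by metis
  have "\<bar>pd a \<phi> z\<bar> \<le> (\<Sum>a\<in>UNIV. B a)" for a z
    using B(2)[of a z] member_le_sum[of a UNIV B] B(1) by force
  moreover have "(\<Sum>a\<in>UNIV. B a) \<ge> 0" using B(1) by (simp add: sum_nonneg)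
  ultimately show ?thesis by blast
qed

lemma pd_eta_eq: "pd a \<eta> z = 2 * \<phi> z * pd a \<phi> z"
proof -
  have "has_partial a (\<lambda>y. \<phi> y * \<phi> y) (\<lambda>y. pd a \<phi> y * \<phi> y + \<phi> y * pd a \<phi> y)"
    by (rule has_partial_mult[OF has_partial_phi has_partial_phi])
  moreover have "\<phi> y * \<phi> y = \<eta> y" for y
    unfolding \<phi>_def using eta_range[of y] by simp
  ultimately have "has_partial a \<eta> (\<lambda>y. pd a \<phi> y * \<phi> y + \<phi> y * pd a \<phi> y)"
    by (rule has_partial_cong) auto
  then show ?thesis using pd_eq_if_has_partial by fastforce
qed

lemma pd_eta_eq_0_inside: "norm z < 1 \<Longrightarrow> pd a \<eta> z = 0"
proof -
  assume z: "norm z < 1"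
  have d: "((\<lambda>s. \<eta> (z + s *\<^sub>R axis a 1)) has_real_derivative pd a \<eta> z) (at 0)"
    using has_partial_eta unfolding has_partial_def by blast
  have "\<eta> (z + 0 *\<^sub>R axis a 1) = \<eta> (z + y *\<^sub>R axis a 1)" if "\<bar>0 - y\<bar> < 1 - norm z" for y
  proof -
    have "norm (z + y *\<^sub>R axis a 1) < 1"
      using that norm_triangle_ineq[of z "y *\<^sub>R axis a 1"] by simp
    then show ?thesis
      using cutoff z unfolding cutoff_def by simp
  qed
  then show ?thesis using DERIV_local_const[OF d, of "1 - norm z"] z by simp
qed

definition "detaR R a y = (1/R) * pd a \<eta> ((1/R) *\<^sub>R y)"

lemma has_partial_etaR:
  assumes "R > 0"
  shows "has_partial a (etaR \<eta> R) (detaR R a)"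
  unfolding has_partial_def
proof
  fix y :: "real^'n"
  let ?z = "(1/R) *\<^sub>R y"
  have d: "((\<lambda>u. \<eta> (?z + u *\<^sub>R axis a 1)) has_real_derivative pd a \<eta> ?z) (at ((\<lambda>s. s / R) 0))"
    using has_partial_eta unfolding has_partial_def by simp
  have "((\<lambda>s. s / R) has_real_derivative 1 / R) (at 0)"
    using assms by (auto intro!: derivative_eq_intros)
  from DERIV_chain2[OF d this]
  have "((\<lambda>s. \<eta> (?z + (s / R) *\<^sub>R axis a 1)) has_real_derivative pd a \<eta> ?z * (1/R)) (at 0)" .
  moreover have "?z + (s / R) *\<^sub>R axis a 1 = (1/R) *\<^sub>R (y + s *\<^sub>R axis a 1)" for s
    using assms by (simp add: scaleR_add_right divide_inverse_commute)
  ultimately show "((\<lambda>s. etaR \<eta> R (y + s *\<^sub>R axis a 1)) has_real_derivative detaR R a y) (at 0)"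
    unfolding etaR_def detaR_def using assms by (simp add: mult.commute)
qed

lemma continuous_on_etaR: "continuous_on UNIV (etaR \<eta> R)"
  unfolding etaR_def[abs_def]
  by (intro continuous_on_compose2[OF continuous_on_eta] continuous_intros) auto

lemma continuous_on_detaR: "continuous_on UNIV (detaR R a)"
  unfolding detaR_def[abs_def]
  by (intro continuous_intros continuous_on_compose2[OF continuous_on_pd_eta]) auto

lemma etaR_range: "0 \<le> etaR \<eta> R y" "etaR \<eta> R y \<le> 1"
  unfolding etaR_def using eta_range by auto

lemma etaR_eq_0: "R > 0 \<Longrightarrow> 2 * R \<le> norm y \<Longrightarrow> etaR \<eta> R y = 0"
  unfolding etaR_def by (rule eta_eq_0) (simp add: field_simps)

lemma etaR_eq_0_outside_cube: "R > 0 \<Longrightarrow> y \<notin> cube (2*R+1) \<Longrightarrow> etaR \<eta> R y = 0"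
  using etaR_eq_0 mem_cube[of y "2*R+1"] by force

(* This is where eta = (sqrt eta)^2 is used: it gives the factor sqrt(etaR) needed for AM-GM. *)
lemma abs_detaR_le:
  assumes R: "R > 0" and M: "\<And>a z. \<bar>pd a \<phi> z\<bar> \<le> M"
  shows "\<bar>detaR R a y\<bar> \<le> 2 * M / R * sqrt (etaR \<eta> R y) * indicator (ball 0 (2*R) - ball 0 R) y"
proof -
  let ?z = "(1/R) *\<^sub>R y"
  have nz: "norm ?z = norm y / R" using R by simp
  show ?thesis
  proof (cases "y \<in> ball 0 (2*R) - ball 0 R")
    case True
    have "\<bar>detaR R a y\<bar> = (1/R) * (2 * \<phi> ?z * \<bar>pd a \<phi> ?z\<bar>)"
      unfolding detaR_def pd_eta_eq using R eta_range[of ?z] by (simp add: abs_mult \<phi>_def)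
    also have "\<dots> \<le> (1/R) * (2 * \<phi> ?z * M)"
      using R M eta_range[of ?z] by (intro mult_left_mono) (auto simp: \<phi>_def)
    also have "\<dots> = 2 * M / R * sqrt (etaR \<eta> R y)"
      by (simp add: \<phi>_def etaR_def)
    finally show ?thesis using True by simp
  next
    case False
    then have "norm y < R \<or> 2 * R \<le> norm y" by auto
    then have "pd a \<eta> ?z = 0"
    proof
      assume "norm y < R" then show ?thesis using pd_eta_eq_0_inside nz R by (simp add: field_simps)
    next
      assume "2 * R \<le> norm y" then have "2 \<le> norm ?z" using nz R by (simp add: field_simps)
      then show ?thesis using pd_eta_eq pd_phi_eq_0 by simp
    qed
    then show ?thesis using False by (simp add: detaR_def)
  qed
qed

end

section \<open>Pointwise bounds on a time slice\<close>

lemma abs_sum_le_card_mult: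
  fixes f :: "'a::finite \<Rightarrow> real"
  assumes "\<And>x. \<bar>f x\<bar> \<le> K"
  shows "\<bar>\<Sum>x\<in>UNIV. f x\<bar> \<le> real CARD('a) * K"
  using order_trans[OF sum_abs sum_bounded_above[of UNIV "\<lambda>x. \<bar>f x\<bar>" K]] assms by simp

lemma abs_mult_le_half_squares: "\<bar>u * v\<bar> \<le> u\<^sup>2 / 2 + v\<^sup>2 / 2" for u v :: real
  using sum_squares_bound[of "\<bar>u\<bar>" "\<bar>v\<bar>"] by (simp add: abs_mult)

lemma abs_mult_le_if_squares_le: "x\<^sup>2 \<le> g \<Longrightarrow> y\<^sup>2 \<le> g \<Longrightarrow> \<bar>x * y\<bar> \<le> (g::real)"
  using abs_mult_le_half_squares[of x y] by linarith

definition grad_sq_slice :: "(real^'n \<Rightarrow> real^'n^'n) \<Rightarrow> real^'n::finite \<Rightarrow> real" where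
  "grad_sq_slice H y = (\<Sum>a\<in>UNIV. \<Sum>i\<in>UNIV. \<Sum>j\<in>UNIV. (Dh H a i j y)\<^sup>2)"

lemma grad_sq_slice_nonneg: "0 \<le> grad_sq_slice H y"
  unfolding grad_sq_slice_def by (intro sum_nonneg) auto

lemma Dh_sq_le_grad_sq_slice: "(Dh H a i j y)\<^sup>2 \<le> grad_sq_slice H y"
proof -
  have "(Dh H a i j y)\<^sup>2 \<le> (\<Sum>j\<in>UNIV. (Dh H a i j y)\<^sup>2)"
    by (rule member_le_sum) auto
  also have "\<dots> \<le> (\<Sum>i\<in>UNIV. \<Sum>j\<in>UNIV. (Dh H a i j y)\<^sup>2)"
    by (rule member_le_sum[where f="\<lambda>i. \<Sum>j\<in>UNIV. (Dh H a i j y)\<^sup>2"]) (auto intro: sum_nonneg)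
  also have "\<dots> \<le> grad_sq_slice H y" unfolding grad_sq_slice_def
    by (rule member_le_sum[where f="\<lambda>a. \<Sum>i\<in>UNIV. \<Sum>j\<in>UNIV. (Dh H a i j y)\<^sup>2"]) (auto intro!: sum_nonneg)
  finally show ?thesis .
qed

lemma abs_Dh_mult_Dh_le: "\<bar>Dh H a i j y * Dh H b k l y\<bar> \<le> grad_sq_slice H y"
  by (rule abs_mult_le_if_squares_le[OF Dh_sq_le_grad_sq_slice Dh_sq_le_grad_sq_slice])

locale metric_slice =
  fixes H :: "real^'n::finite \<Rightarrow> real^'n^'n" and B :: real
  assumes norm_le: "\<And>y. norm (H y) \<le> B" and B_le_half: "B \<le> 1/2"
    and has_partial_H: "\<And>a i j. has_partial a (\<lambda>y. H y $ i $ j) (Dh H a i j)"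
    and has_partial_DH: "\<And>a b i j. has_partial b (Dh H a i j) (pd b (Dh H a i j))"
    and continuous_H: "\<And>i j. continuous_on UNIV (\<lambda>y. H y $ i $ j)"
    and continuous_DH: "\<And>a i j. continuous_on UNIV (Dh H a i j)"
    and continuous_DDH: "\<And>a b i j. continuous_on UNIV (pd b (Dh H a i j))"
begin

abbreviation "N y \<equiv> ginv H y"

lemma norm_le_half: "norm (H y) \<le> 1/2"
  using norm_le B_le_half order_trans by blast

lemma B_nonneg: "0 \<le> B"
  using norm_le[of 0] norm_ge_zero order_trans by blast

lemma abs_H_le: "\<bar>H y $ i $ j\<bar> \<le> B"
  using abs_matrix_entry_le_norm norm_le order_trans by blast

lemma abs_N_le: "\<bar>N y $ p $ q\<bar> \<le> 2"
  unfolding ginv_def using inv_id_plus(3)[OF norm_le_half] .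

lemma abs_N_minus_kd_le: "\<bar>N y $ a $ b - kd a b\<bar> \<le> 2 * real CARD('n) * B"
proof -
  have "N y + H y ** N y = mat 1"
    using inv_id_plus(1)[OF norm_le_half] by (simp add: ginv_def matrix_add_rdistrib)
  then have "N y $ a $ b - kd a b = - (\<Sum>p\<in>UNIV. H y $ a $ p * N y $ p $ b)"
    by (auto simp: vec_eq_iff kd_def mat_def matrix_matrix_mult_def algebra_simps)
  also have "\<bar>\<dots>\<bar> \<le> real CARD('n) * (B * 2)"
    unfolding abs_minus_cancel
    by (rule abs_sum_le_card_mult) (simp add: abs_mult abs_H_le abs_N_le B_nonneg mult_mono)
  finally show ?thesis by simp
qed

definition "dN a p q y = - (\<Sum>u\<in>UNIV. \<Sum>r\<in>UNIV. N y $ p $ r * Dh H a r u y * N y $ u $ q)"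

lemma has_partial_N: "has_partial a (\<lambda>y. N y $ p $ q) (dN a p q)"
  unfolding has_partial_def
proof
  fix y :: "real^'n"
  let ?Af = "\<lambda>s. H (y + s *\<^sub>R axis a 1)"
  have "((\<lambda>s. inv_id_plus (?Af s) $ p $ q) has_real_derivative
     - (\<Sum>u\<in>UNIV. \<Sum>r\<in>UNIV. inv_id_plus (?Af 0) $ p $ r * (\<chi> i j. Dh H a i j y) $ r $ u
        * inv_id_plus (?Af 0) $ u $ q)) (at 0)"
    using has_partial_H norm_le_half unfolding has_partial_def
    by (intro has_real_derivative_inv_id_plus) auto
  then show "((\<lambda>s. N (y + s *\<^sub>R axis a 1) $ p $ q) has_real_derivative dN a p q y) (at 0)"
    by (simp add: dN_def ginv_def)
qed

lemma continuous_on_N: "continuous_on UNIV (\<lambda>y. N y $ p $ q)"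
proof -
  have "isCont (\<lambda>y. N y $ p $ q) y0" for y0
    unfolding isCont_def ginv_def using norm_le_half continuous_H
    by (intro tendsto_inv_id_plus) (auto simp: continuous_on_eq_continuous_at isCont_def)
  then show ?thesis by (simp add: continuous_at_imp_continuous_on)
qed

lemma continuous_on_dN: "continuous_on UNIV (dN a p q)"
  unfolding dN_def[abs_def] by (intro continuous_intros continuous_on_N continuous_DH)

lemma abs_dN_mult_Dh_le: "\<bar>dN a p q y * Dh H b i j y\<bar> \<le> real CARD('n) * (real CARD('n) * (4 * grad_sq_slice H y))"
proof -
  have "dN a p q y * Dh H b i j y =
      - (\<Sum>u\<in>UNIV. \<Sum>r\<in>UNIV. N y $ p $ r * N y $ u $ q * (Dh H a r u y * Dh H b i j y))"
    unfolding dN_def by (simp add: sum_distrib_left sum_distrib_right mult_ac)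
  also have "\<bar>\<dots>\<bar> \<le> real CARD('n) * (real CARD('n) * (4 * grad_sq_slice H y))"
    unfolding abs_minus_cancel
  proof (intro abs_sum_le_card_mult)
    fix u r
    have "\<bar>N y $ p $ r * N y $ u $ q\<bar> \<le> 2 * 2"
      unfolding abs_mult by (intro mult_mono abs_N_le) auto
    then show "\<bar>N y $ p $ r * N y $ u $ q * (Dh H a r u y * Dh H b i j y)\<bar> \<le> 4 * grad_sq_slice H y"
      unfolding abs_mult[of "N y $ p $ r * N y $ u $ q"] using abs_Dh_mult_Dh_le[of H a r u y b i j]
      by (intro mult_mono) auto
  qed
  finally show ?thesis .
qed

definition "Q1 a i j y = (\<Sum>b\<in>UNIV. (N y $ a $ b - kd a b) * Dh H b i j y)"

definition "flux a i j y = (\<Sum>b\<in>UNIV. N y $ a $ b * Dh H b i j y)"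
definition "dflux a i j y = (\<Sum>b\<in>UNIV. dN a a b y * Dh H b i j y + N y $ a $ b * pd a (Dh H b i j) y)"

lemma has_partial_flux: "has_partial a (flux a i j) (dflux a i j)"
  unfolding flux_def[abs_def] dflux_def[abs_def]
  by (intro has_partial_sum has_partial_mult has_partial_N has_partial_DH)

lemma continuous_on_flux: "continuous_on UNIV (flux a i j)"
  unfolding flux_def[abs_def] by (intro continuous_intros continuous_on_N continuous_DH)

lemma continuous_on_dflux: "continuous_on UNIV (dflux a i j)"
  unfolding dflux_def[abs_def]
  by (intro continuous_intros continuous_on_N continuous_DH continuous_on_dN continuous_DDH)

lemma flux_eq: "flux a i j y = Dh H a i j y + Q1 a i j y"
proof -
  have "(\<Sum>b\<in>UNIV. kd a b * Dh H b i j y) = (\<Sum>b\<in>UNIV. if b = a then Dh H a i j y else 0)"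
    by (rule sum.cong) (auto simp: kd_def)
  then have "(\<Sum>b\<in>UNIV. kd a b * Dh H b i j y) = Dh H a i j y"
    by simp
  then show ?thesis
    unfolding flux_def Q1_def by (simp add: left_diff_distrib sum_subtractf)
qed

lemma lap_plus_divQ1_eq: "lap H i j y + divQ1 H i j y = (\<Sum>a\<in>UNIV. dflux a i j y)"
proof -
  have "pd a (\<lambda>z. \<Sum>b\<in>UNIV. (ginv H z $ a $ b - kd a b) * Dh H b i j z) y
        = dflux a i j y - pd a (Dh H a i j) y" for a
  proof -
    have "has_partial a (\<lambda>z. flux a i j z - Dh H a i j z) (\<lambda>z. dflux a i j z - pd a (Dh H a i j) z)"
      by (intro has_partial_diff has_partial_flux has_partial_DH)
    then have "has_partial a (\<lambda>z. \<Sum>b\<in>UNIV. (ginv H z $ a $ b - kd a b) * Dh H b i j z)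
        (\<lambda>z. dflux a i j z - pd a (Dh H a i j) z)"
      by (rule has_partial_cong) (auto simp: flux_eq Q1_def)
    then show ?thesis by (simp add: pd_eq_if_has_partial)
  qed
  then show ?thesis
    unfolding lap_def divQ1_def by (simp add: sum_subtractf)
qed

lemma abs_Q0_summand_le:
  "\<bar>Dh H i p a y * Dh H j q b y
        + 2 * Dh H a j p y * Dh H q i b y
        - 2 * Dh H a j p y * Dh H b i q y
        - 2 * Dh H j p a y * Dh H b i q y
        - 2 * Dh H i p a y * Dh H b j q y\<bar> \<le> 9 * grad_sq_slice H y"
  using abs_Dh_mult_Dh_le[of H i p a y j q b] abs_Dh_mult_Dh_le[of H a j p y q i b]
    abs_Dh_mult_Dh_le[of H a j p y b i q] abs_Dh_mult_Dh_le[of H j p a y b i q]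
    abs_Dh_mult_Dh_le[of H i p a y b j q]
  unfolding abs_le_iff by (simp add: mult.assoc)

lemma abs_Q0_le: "\<bar>Q0 H i j y\<bar> \<le> 22 * real CARD('n) ^ 4 * grad_sq_slice H y"
proof -
  let ?n = "real CARD('n)"
  let ?g = "grad_sq_slice H y"
  define S1 where "S1 = (\<Sum>a\<in>UNIV. \<Sum>b\<in>UNIV. \<Sum>p\<in>UNIV. \<Sum>q\<in>UNIV.
        ginv H y $ a $ b * ginv H y $ p $ q *
        ( Dh H i p a y * Dh H j q b y
        + 2 * Dh H a j p y * Dh H q i b y
        - 2 * Dh H a j p y * Dh H b i q y
        - 2 * Dh H j p a y * Dh H b i q y
        - 2 * Dh H i p a y * Dh H b j q y))"
  define S2 where "S2 = (\<Sum>a\<in>UNIV. \<Sum>b\<in>UNIV. pd a (\<lambda>z. ginv H z $ a $ b) y * Dh H b i j y)"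
  have Q: "Q0 H i j y = 1/2 * S1 - S2" unfolding Q0_def S1_def S2_def by simp
  have "\<bar>S1\<bar> \<le> ?n * (?n * (?n * (?n * (4 * (9 * ?g)))))"
    unfolding S1_def
  proof (intro abs_sum_le_card_mult)
    fix a b p q
    have "\<bar>ginv H y $ a $ b * ginv H y $ p $ q\<bar> \<le> 2 * 2"
      unfolding abs_mult by (intro mult_mono abs_N_le) auto
    then show "\<bar>ginv H y $ a $ b * ginv H y $ p $ q *
        ( Dh H i p a y * Dh H j q b y
        + 2 * Dh H a j p y * Dh H q i b y
        - 2 * Dh H a j p y * Dh H b i q y
        - 2 * Dh H j p a y * Dh H b i q y
        - 2 * Dh H i p a y * Dh H b j q y)\<bar> \<le> 4 * (9 * ?g)"
      unfolding abs_mult[of "ginv H y $ a $ b * ginv H y $ p $ q"]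
      using abs_Q0_summand_le[of i p a y j q b] by (intro mult_mono) auto
  qed
  moreover have "\<bar>S2\<bar> \<le> ?n * (?n * (?n * (?n * (4 * ?g))))"
    unfolding S2_def pd_eq_if_has_partial[OF has_partial_N]
    by (intro abs_sum_le_card_mult abs_dN_mult_Dh_le)
  ultimately show ?thesis unfolding Q by (simp add: power4_eq_xxxx)
qed

end

section \<open>The energy estimate on a time slice\<close>

definition annulus_const :: "real \<Rightarrow> real \<Rightarrow> real" where
  "annulus_const n M = 2 * M\<^sup>2 + 2 * n\<^sup>2 * M\<^sup>2"

lemma annulus_const_nonneg: "0 \<le> annulus_const n M"
  unfolding annulus_const_def by simp

(* 3 n^5 and 22 n^6 come from the Q1 and Q0 terms, n * annulus_const from the cut-off terms. *)
definition energy_const :: "real \<Rightarrow> real \<Rightarrow> real" where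
  "energy_const n M = 3 * n ^ 5 + 22 * n ^ 6 + n * annulus_const n M + 1"

lemma energy_const_pos: "0 \<le> n \<Longrightarrow> 0 < energy_const n M"
  unfolding energy_const_def using annulus_const_nonneg by (simp add: add_nonneg_pos)

locale energy_estimate = cutoff_function c \<eta> + metric_slice H B
  for c :: real and \<eta> :: "real^'n::finite \<Rightarrow> real" and H :: "real^'n \<Rightarrow> real^'n^'n" and B :: real +
  fixes R M \<epsilon> :: real
  assumes R_pos: "R > 0" and M: "\<And>a z. \<bar>pd a \<phi> z\<bar> \<le> M" and M_nonneg: "M \<ge> 0" and B_le_eps: "B \<le> \<epsilon>"
begin

abbreviation annulus :: "(real^'n) set" where
  "annulus \<equiv> ball 0 (2*R) - ball 0 R"

abbreviation ind :: "real^'n \<Rightarrow> real" where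
  "ind \<equiv> indicator annulus"

lemma ind_range: "0 \<le> ind y" "ind y \<le> 1" "ind y * ind y = ind y"
  unfolding indicator_def by auto

lemma abs_detaR_mult_le:
  "\<bar>detaR R a y * x * D\<bar> \<le> etaR \<eta> R y * D\<^sup>2 / 2 + 2 * M\<^sup>2 / R\<^sup>2 * ind y * x\<^sup>2"
proof -
  let ?s = "sqrt (etaR \<eta> R y)"
  have "\<bar>detaR R a y * x * D\<bar> = \<bar>detaR R a y\<bar> * \<bar>x\<bar> * \<bar>D\<bar>" by (simp add: abs_mult)
  also have "\<dots> \<le> (2 * M / R * ?s * ind y) * \<bar>x\<bar> * \<bar>D\<bar>"
    using abs_detaR_le[OF R_pos M] by (intro mult_right_mono) auto
  also have "\<dots> = \<bar>(?s * D) * (2 * M / R * ind y * x)\<bar>"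
    using R_pos M_nonneg ind_range etaR_range[of R y] by (simp add: abs_mult)
  also have "\<dots> \<le> (?s * D)\<^sup>2 / 2 + (2 * M / R * ind y * x)\<^sup>2 / 2"
    by (rule abs_mult_le_half_squares)
  also have "\<dots> = etaR \<eta> R y * D\<^sup>2 / 2 + 2 * M\<^sup>2 / R\<^sup>2 * (ind y * ind y) * x\<^sup>2"
    using etaR_range[of R y] by (simp add: power_mult_distrib power2_eq_square field_simps)
  finally show ?thesis using ind_range by simp
qed

lemma abs_Dh_mult_Q1_le: "\<bar>Dh H a i j y * Q1 a i j y\<bar> \<le> real CARD('n) * ((2 * real CARD('n) * B) * grad_sq_slice H y)"
  unfolding Q1_def sum_distrib_left
proof (rule abs_sum_le_card_mult)
  fix b
  have "\<bar>Dh H a i j y * ((N y $ a $ b - kd a b) * Dh H b i j y)\<bar> =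
    \<bar>N y $ a $ b - kd a b\<bar> * \<bar>Dh H a i j y * Dh H b i j y\<bar>" by (simp add: abs_mult)
  also have "\<dots> \<le> (2 * real CARD('n) * B) * grad_sq_slice H y"
    using abs_N_minus_kd_le abs_Dh_mult_Dh_le B_nonneg by (intro mult_mono) auto
  finally show "\<bar>Dh H a i j y * ((N y $ a $ b - kd a b) * Dh H b i j y)\<bar> \<le> (2 * real CARD('n) * B) * grad_sq_slice H y" .
qed

lemma abs_detaR_mult_Q1_le:
  "\<bar>detaR R a y * x * Q1 a i j y\<bar>
     \<le> real CARD('n) * ((2 * real CARD('n) * B) * (etaR \<eta> R y * grad_sq_slice H y / 2 + 2 * M\<^sup>2 / R\<^sup>2 * ind y * x\<^sup>2))"
  unfolding Q1_def sum_distrib_left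
proof (rule abs_sum_le_card_mult)
  fix b
  have "\<bar>detaR R a y * x * ((N y $ a $ b - kd a b) * Dh H b i j y)\<bar> =
    \<bar>N y $ a $ b - kd a b\<bar> * \<bar>detaR R a y * x * Dh H b i j y\<bar>" by (simp add: abs_mult)
  also have "\<dots> \<le> (2 * real CARD('n) * B) * (etaR \<eta> R y * (Dh H b i j y)\<^sup>2 / 2 + 2 * M\<^sup>2 / R\<^sup>2 * ind y * x\<^sup>2)"
    using abs_N_minus_kd_le abs_detaR_mult_le B_nonneg by (intro mult_mono) auto
  also have "\<dots> \<le> (2 * real CARD('n) * B) * (etaR \<eta> R y * grad_sq_slice H y / 2 + 2 * M\<^sup>2 / R\<^sup>2 * ind y * x\<^sup>2)"
    using B_nonneg etaR_range Dh_sq_le_grad_sq_slice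
    by (intro mult_left_mono) (auto intro!: mult_left_mono divide_right_mono)
  finally show "\<bar>detaR R a y * x * ((N y $ a $ b - kd a b) * Dh H b i j y)\<bar>
     \<le> (2 * real CARD('n) * B) * (etaR \<eta> R y * grad_sq_slice H y / 2 + 2 * M\<^sup>2 / R\<^sup>2 * ind y * x\<^sup>2)" .
qed

(* Writing flux = d h + Q1, only - etaR (d h)^2 is not small; the cut-off term d etaR h d h is
   split by AM-GM into half of it plus an annulus term. *)
lemma flux_term_le:
  "- ((detaR R a y * H y $ i $ j + etaR \<eta> R y * Dh H a i j y) * flux a i j y)
    \<le> - (etaR \<eta> R y * (Dh H a i j y)\<^sup>2 / 2) + 3/2 * real CARD('n) * (2 * real CARD('n) * B) * (etaR \<eta> R y * grad_sq_slice H y)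
      + annulus_const (real CARD('n)) M / R\<^sup>2 * ind y * (H y $ i $ j)\<^sup>2"
proof -
  let ?x = "H y $ i $ j" and ?D = "Dh H a i j y" and ?Q = "Q1 a i j y" and ?E = "etaR \<eta> R y"
  have split: "- ((detaR R a y * ?x + ?E * ?D) * flux a i j y)
      = - (?E * ?D\<^sup>2) - ?E * (?D * ?Q) - detaR R a y * ?x * ?D - detaR R a y * ?x * ?Q"
    unfolding flux_eq by (simp add: algebra_simps power2_eq_square)
  have b1: "- (?E * (?D * ?Q)) \<le> ?E * (real CARD('n) * ((2 * real CARD('n) * B) * grad_sq_slice H y))"
    using abs_Dh_mult_Q1_le[of a i j y] etaR_range[of R y]
    by (smt (verit) abs_le_iff mult_left_mono mult_minus_right)
  have b2: "- (detaR R a y * ?x * ?D) \<le> ?E * ?D\<^sup>2 / 2 + 2 * M\<^sup>2 / R\<^sup>2 * ind y * ?x\<^sup>2"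
    using abs_detaR_mult_le[of a y ?x ?D] by linarith
  have b3: "- (detaR R a y * ?x * ?Q)
      \<le> real CARD('n) * ((2 * real CARD('n) * B) * (?E * grad_sq_slice H y / 2 + 2 * M\<^sup>2 / R\<^sup>2 * ind y * ?x\<^sup>2))"
    using abs_detaR_mult_Q1_le[of a y ?x i j] by linarith
  have b4: "real CARD('n) * ((2 * real CARD('n) * B) * (2 * M\<^sup>2 / R\<^sup>2 * ind y * ?x\<^sup>2))
      \<le> real CARD('n) * (real CARD('n) * (2 * M\<^sup>2 / R\<^sup>2 * ind y * ?x\<^sup>2))"
    using B_le_half B_nonneg ind_range R_pos by (intro mult_left_mono mult_right_mono) auto
  have "annulus_const (real CARD('n)) M / R\<^sup>2 * ind y * ?x\<^sup>2
      = 2 * M\<^sup>2 / R\<^sup>2 * ind y * ?x\<^sup>2 + real CARD('n) * (real CARD('n) * (2 * M\<^sup>2 / R\<^sup>2 * ind y * ?x\<^sup>2))"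
    using R_pos unfolding annulus_const_def by (simp add: field_simps power2_eq_square)
  then show ?thesis unfolding split using b1 b2 b3 b4
    by (simp add: algebra_simps add_divide_distrib)
qed

lemma Q0_term_le: "etaR \<eta> R y * (\<Sum>i\<in>UNIV. \<Sum>j\<in>UNIV. H y $ i $ j * Q0 H i j y)
   \<le> 22 * real CARD('n) ^ 6 * B * (etaR \<eta> R y * grad_sq_slice H y)"
proof -
  have "\<bar>\<Sum>i\<in>UNIV. \<Sum>j\<in>UNIV. H y $ i $ j * Q0 H i j y\<bar>
     \<le> real CARD('n) * (real CARD('n) * (B * (22 * real CARD('n) ^ 4 * grad_sq_slice H y)))"
  proof (intro abs_sum_le_card_mult)
    fix i j
    show "\<bar>H y $ i $ j * Q0 H i j y\<bar> \<le> B * (22 * real CARD('n) ^ 4 * grad_sq_slice H y)"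
      unfolding abs_mult using abs_H_le abs_Q0_le B_nonneg by (intro mult_mono) auto
  qed
  then have "etaR \<eta> R y * (\<Sum>i\<in>UNIV. \<Sum>j\<in>UNIV. H y $ i $ j * Q0 H i j y)
     \<le> etaR \<eta> R y * (real CARD('n) * (real CARD('n) * (B * (22 * real CARD('n) ^ 4 * grad_sq_slice H y))))"
    using etaR_range[of R y] by (intro mult_left_mono) auto
  then show ?thesis by (simp add: power_def algebra_simps)
qed

(* The integrand left after integrating the divergence part by parts against etaR h. *)
definition "energy_integrand y =
   (\<Sum>a\<in>UNIV. \<Sum>i\<in>UNIV. \<Sum>j\<in>UNIV. - ((detaR R a y * H y $ i $ j + etaR \<eta> R y * Dh H a i j y) * flux a i j y))
   + etaR \<eta> R y * (\<Sum>i\<in>UNIV. \<Sum>j\<in>UNIV. H y $ i $ j * Q0 H i j y)"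

lemma sum_flux_term_bounds:
  "(\<Sum>a\<in>UNIV. \<Sum>i\<in>UNIV. \<Sum>j\<in>UNIV. - (etaR \<eta> R y * (Dh H a i j y)\<^sup>2 / 2) + X + Y * (H y $ i $ j)\<^sup>2)
    = - (etaR \<eta> R y * grad_sq_slice H y) / 2 + real CARD('n) ^ 3 * X + real CARD('n) * Y * (norm (H y))\<^sup>2"
proof -
  have "(\<Sum>a\<in>UNIV. \<Sum>i\<in>UNIV. \<Sum>j\<in>UNIV. - (etaR \<eta> R y * (Dh H a i j y)\<^sup>2 / 2))
      = - (etaR \<eta> R y * grad_sq_slice H y) / 2"
    unfolding grad_sq_slice_def by (simp add: sum_negf sum_distrib_left sum_divide_distrib)
  moreover have "(\<Sum>a\<in>(UNIV::'n set). \<Sum>i\<in>UNIV. \<Sum>j\<in>UNIV. Y * (H y $ i $ j)\<^sup>2)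
      = real CARD('n) * Y * (norm (H y))\<^sup>2"
    by (simp add: power2_norm_matrix sum_distrib_left mult.assoc)
  ultimately show ?thesis
    by (simp only: sum.distrib) (simp add: power3_eq_cube)
qed

lemma energy_integrand_le:
  "energy_integrand y \<le> (- 1/2 + energy_const (real CARD('n)) M * \<epsilon>) * (etaR \<eta> R y * grad_sq_slice H y)
     + energy_const (real CARD('n)) M / R\<^sup>2 * (ind y * (norm (H y))\<^sup>2)"
proof -
  let ?Eg = "etaR \<eta> R y * grad_sq_slice H y" and ?C = "energy_const (real CARD('n)) M"
    and ?cA = "annulus_const (real CARD('n)) M"
  have Eg: "0 \<le> ?Eg" using mult_nonneg_nonneg[OF etaR_range(1) grad_sq_slice_nonneg] .
  have "(\<Sum>a\<in>UNIV. \<Sum>i\<in>UNIV. \<Sum>j\<in>UNIV.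
          - ((detaR R a y * H y $ i $ j + etaR \<eta> R y * Dh H a i j y) * flux a i j y))
    \<le> (\<Sum>a\<in>UNIV. \<Sum>i\<in>UNIV. \<Sum>j\<in>UNIV. - (etaR \<eta> R y * (Dh H a i j y)\<^sup>2 / 2)
          + 3/2 * real CARD('n) * (2 * real CARD('n) * B) * ?Eg + ?cA / R\<^sup>2 * ind y * (H y $ i $ j)\<^sup>2)"
    by (intro sum_mono flux_term_le)
  also have "\<dots> = - ?Eg / 2 + 3 * real CARD('n) ^ 5 * B * ?Eg
      + real CARD('n) * ?cA / R\<^sup>2 * (ind y * (norm (H y))\<^sup>2)"
    unfolding sum_flux_term_bounds by (simp add: power_def algebra_simps)
  finally have flux_part: "(\<Sum>a\<in>UNIV. \<Sum>i\<in>UNIV. \<Sum>j\<in>UNIV.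
          - ((detaR R a y * H y $ i $ j + etaR \<eta> R y * Dh H a i j y) * flux a i j y))
    \<le> - ?Eg / 2 + 3 * real CARD('n) ^ 5 * B * ?Eg + real CARD('n) * ?cA / R\<^sup>2 * (ind y * (norm (H y))\<^sup>2)" .
  have "(3 * real CARD('n) ^ 5 + 22 * real CARD('n) ^ 6) * B * ?Eg \<le> ?C * \<epsilon> * ?Eg"
    using B_le_eps B_nonneg Eg annulus_const_nonneg unfolding energy_const_def
    by (intro mult_right_mono mult_mono) auto
  moreover have "real CARD('n) * ?cA / R\<^sup>2 * (ind y * (norm (H y))\<^sup>2) \<le> ?C / R\<^sup>2 * (ind y * (norm (H y))\<^sup>2)"
    using ind_range R_pos unfolding energy_const_def
    by (intro mult_right_mono divide_right_mono) auto
  ultimately show ?thesis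
    unfolding energy_integrand_def using flux_part Q0_term_le[of y] by (simp add: algebra_simps)
qed

end

context energy_estimate
begin

definition "weighted_flux a i j y = etaR \<eta> R y * H y $ i $ j * flux a i j y"

definition "dweighted_flux a i j y =
   detaR R a y * H y $ i $ j * flux a i j y + etaR \<eta> R y * Dh H a i j y * flux a i j y
    + etaR \<eta> R y * H y $ i $ j * dflux a i j y"

lemma has_partial_weighted_flux: "has_partial a (weighted_flux a i j) (dweighted_flux a i j)"
proof -
  have "has_partial a (\<lambda>y. etaR \<eta> R y * H y $ i $ j * flux a i j y)
    (\<lambda>y. (detaR R a y * H y $ i $ j + etaR \<eta> R y * Dh H a i j y) * flux a i j y
          + etaR \<eta> R y * H y $ i $ j * dflux a i j y)"
    by (intro has_partial_mult has_partial_etaR[OF R_pos] has_partial_H has_partial_flux)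
  then show ?thesis unfolding weighted_flux_def[abs_def] dweighted_flux_def[abs_def]
    by (rule has_partial_cong) (auto simp: algebra_simps)
qed

lemma continuous_on_dweighted_flux: "continuous_on UNIV (dweighted_flux a i j)"
  unfolding dweighted_flux_def[abs_def]
  by (intro continuous_intros continuous_on_etaR continuous_H continuous_on_flux continuous_on_detaR
      continuous_DH continuous_on_dflux)

lemma integral_dweighted_flux: "integral (cube (2*R+1)) (dweighted_flux a i j) = 0"
proof (rule integral_partial_eq_0[OF has_partial_weighted_flux])
  show "continuous_on UNIV (weighted_flux a i j)"
    unfolding weighted_flux_def[abs_def]
    by (intro continuous_intros continuous_on_etaR continuous_H continuous_on_flux)
  show "weighted_flux a i j y = 0" if "2 * R \<le> norm y" for y
    unfolding weighted_flux_def using etaR_eq_0[OF R_pos that] by simp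
qed (auto intro: continuous_on_dweighted_flux)

lemma continuous_on_Q0: "continuous_on UNIV (Q0 H i j)"
  unfolding Q0_def pd_eq_if_has_partial[OF has_partial_N]
  by (intro continuous_intros continuous_on_N continuous_DH continuous_on_dN)

lemma continuous_on_energy_integrand: "continuous_on UNIV energy_integrand"
  unfolding energy_integrand_def[abs_def]
  by (intro continuous_intros continuous_on_etaR continuous_H continuous_on_flux continuous_on_detaR
      continuous_DH continuous_on_Q0)

lemma energy_identity:
  "etaR \<eta> R y * (\<Sum>i\<in>UNIV. \<Sum>j\<in>UNIV. H y $ i $ j * (lap H i j y + Q0 H i j y + divQ1 H i j y))
   = (\<Sum>a\<in>UNIV. \<Sum>i\<in>UNIV. \<Sum>j\<in>UNIV. dweighted_flux a i j y) + energy_integrand y"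
proof -
  have "dweighted_flux a i j y - ((detaR R a y * H y $ i $ j + etaR \<eta> R y * Dh H a i j y) * flux a i j y)
      = etaR \<eta> R y * H y $ i $ j * dflux a i j y" for a i j
    unfolding dweighted_flux_def by (simp add: algebra_simps)
  then have "(\<Sum>a\<in>UNIV. \<Sum>i\<in>UNIV. \<Sum>j\<in>UNIV. dweighted_flux a i j y)
      + (\<Sum>a\<in>UNIV. \<Sum>i\<in>UNIV. \<Sum>j\<in>UNIV.
           - ((detaR R a y * H y $ i $ j + etaR \<eta> R y * Dh H a i j y) * flux a i j y))
      = (\<Sum>a\<in>UNIV. \<Sum>i\<in>UNIV. \<Sum>j\<in>UNIV. etaR \<eta> R y * H y $ i $ j * dflux a i j y)"
    by (simp add: sum.distrib[symmetric])
  also have "\<dots> = (\<Sum>i\<in>UNIV. \<Sum>a\<in>UNIV. \<Sum>j\<in>UNIV. etaR \<eta> R y * H y $ i $ j * dflux a i j y)"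
    by (rule sum.swap)
  also have "\<dots> = (\<Sum>i\<in>UNIV. \<Sum>j\<in>UNIV. \<Sum>a\<in>UNIV. etaR \<eta> R y * H y $ i $ j * dflux a i j y)"
    by (rule sum.cong[OF refl], rule sum.swap)
  also have "\<dots> = etaR \<eta> R y * (\<Sum>i\<in>UNIV. \<Sum>j\<in>UNIV. H y $ i $ j * (lap H i j y + divQ1 H i j y))"
    by (simp add: lap_plus_divQ1_eq sum_distrib_left mult.assoc)
  finally show ?thesis
    unfolding energy_integrand_def by (simp add: algebra_simps sum.distrib)
qed

lemma annulus_subset_cube: "annulus \<subseteq> cube (2*R+1)"
  by (auto intro: mem_cube)

lemma integral_energy_identity:
  "integral (cube (2*R+1))
     (\<lambda>y. etaR \<eta> R y * (\<Sum>i\<in>UNIV. \<Sum>j\<in>UNIV. H y $ i $ j * (lap H i j y + Q0 H i j y + divQ1 H i j y)))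
   = integral (cube (2*R+1)) energy_integrand"
proof -
  let ?K = "cube (2*R+1) :: (real^'n) set"
  have "((\<lambda>y. \<Sum>a\<in>UNIV. \<Sum>i\<in>UNIV. \<Sum>j\<in>UNIV. dweighted_flux a i j y) has_integral
      (\<Sum>a\<in>(UNIV::'n set). \<Sum>i\<in>(UNIV::'n set). \<Sum>j\<in>(UNIV::'n set). 0)) ?K"
  proof (intro has_integral_sum)
    fix a i j
    show "(dweighted_flux a i j has_integral 0) ?K"
      using integral_dweighted_flux integrable_on_cube[OF continuous_on_dweighted_flux]
      by (metis has_integral_integral)
  qed auto
  then have "((\<lambda>y. (\<Sum>a\<in>UNIV. \<Sum>i\<in>UNIV. \<Sum>j\<in>UNIV. dweighted_flux a i j y) + energy_integrand y)
      has_integral (0 + integral ?K energy_integrand)) ?K"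
    by (intro has_integral_add integrable_integral integrable_on_cube continuous_on_energy_integrand) simp
  then show ?thesis
    unfolding energy_identity by (simp add: integral_unique)
qed

lemma has_integral_weighted_grad_sq:
  "((\<lambda>y. etaR \<eta> R y * grad_sq_slice H y) has_integral integral UNIV (\<lambda>y. etaR \<eta> R y * grad_sq_slice H y))
     (cube (2*R+1))"
proof -
  have "continuous_on UNIV (grad_sq_slice H)"
    unfolding grad_sq_slice_def[abs_def] by (intro continuous_intros continuous_DH)
  then have "(\<lambda>y. etaR \<eta> R y * grad_sq_slice H y) integrable_on cube (2*R+1)"
    by (intro integrable_on_cube continuous_intros continuous_on_etaR)
  moreover have "integral (cube (2*R+1)) (\<lambda>y. etaR \<eta> R y * grad_sq_slice H y)
      = integral UNIV (\<lambda>y. etaR \<eta> R y * grad_sq_slice H y)"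
    by (rule integral_eq_integral_UNIV) (simp add: etaR_eq_0_outside_cube[OF R_pos])
  ultimately show ?thesis
    by (metis integrable_integral)
qed

lemma has_integral_annulus_term:
  "((\<lambda>y. ind y * (norm (H y))\<^sup>2) has_integral integral annulus (\<lambda>y. (norm (H y))\<^sup>2)) (cube (2*R+1))"
proof -
  have "continuous_on UNIV (\<lambda>y. (norm (H y))\<^sup>2)"
    unfolding power2_norm_matrix by (intro continuous_intros continuous_H)
  moreover have "annulus \<in> sets lebesgue"
    by (intro sets.Diff fmeasurableD lmeasurable_ball)
  ultimately have "(\<lambda>y. (norm (H y))\<^sup>2) integrable_on annulus"
    by (rule integrable_on_subset_cube[OF _ annulus_subset_cube])
  then have "((\<lambda>y. if y \<in> annulus then (norm (H y))\<^sup>2 else 0) has_integral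
      integral annulus (\<lambda>y. (norm (H y))\<^sup>2)) UNIV"
    unfolding has_integral_restrict_UNIV by (rule integrable_integral)
  moreover have restrict_eq: "(if y \<in> cube (2*R+1) then ind y * (norm (H y))\<^sup>2 else 0)
      = (if y \<in> annulus then (norm (H y))\<^sup>2 else 0)" for y
  proof (cases "y \<in> annulus")
    case True
    then show ?thesis using annulus_subset_cube by auto
  next
    case False
    then have "ind y = 0" by (rule indicator_simps(2))
    then show ?thesis unfolding if_not_P[OF False] by simp
  qed
  ultimately have "((\<lambda>y. if y \<in> cube (2*R+1) then ind y * (norm (H y))\<^sup>2 else 0) has_integral
      integral annulus (\<lambda>y. (norm (H y))\<^sup>2)) UNIV"
    by (simp only: restrict_eq)
  then show ?thesis
    unfolding has_integral_restrict_UNIV .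
qed

lemma energy_slice_estimate:
  "integral (cube (2*R+1))
     (\<lambda>y. etaR \<eta> R y * (\<Sum>i\<in>UNIV. \<Sum>j\<in>UNIV. H y $ i $ j * (lap H i j y + Q0 H i j y + divQ1 H i j y)))
   \<le> (- 1/2 + energy_const (real CARD('n)) M * \<epsilon>) * integral UNIV (\<lambda>y. etaR \<eta> R y * grad_sq_slice H y)
     + energy_const (real CARD('n)) M / R\<^sup>2 * integral annulus (\<lambda>y. (norm (H y))\<^sup>2)"
  unfolding integral_energy_identity
proof (rule has_integral_le)
  show "(energy_integrand has_integral integral (cube (2*R+1)) energy_integrand) (cube (2*R+1))"
    by (intro integrable_integral integrable_on_cube continuous_on_energy_integrand)
  show "((\<lambda>y. (- 1/2 + energy_const (real CARD('n)) M * \<epsilon>) * (etaR \<eta> R y * grad_sq_slice H y)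
         + energy_const (real CARD('n)) M / R\<^sup>2 * (ind y * (norm (H y))\<^sup>2))
     has_integral (- 1/2 + energy_const (real CARD('n)) M * \<epsilon>) * integral UNIV (\<lambda>y. etaR \<eta> R y * grad_sq_slice H y)
       + energy_const (real CARD('n)) M / R\<^sup>2 * integral annulus (\<lambda>y. (norm (H y))\<^sup>2)) (cube (2*R+1))"
    by (intro has_integral_add has_integral_mult_right has_integral_weighted_grad_sq has_integral_annulus_term)
qed (rule energy_integrand_le)
end

section \<open>Differentiation in time\<close>

lemma continuous_on_time_slice:
  fixes f :: "real^'n::finite \<Rightarrow> real \<Rightarrow> real"
  assumes "continuous_on (UNIV \<times> {0..}) (\<lambda>(x,t). f x t)" "0 \<le> t"
  shows "continuous_on UNIV (\<lambda>x. f x t)"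
proof -
  have "continuous_on UNIV (\<lambda>x. (\<lambda>(x,t). f x t) (x, t))"
    by (rule continuous_on_compose2[OF assms(1)]) (use assms(2) in \<open>auto intro!: continuous_intros\<close>)
  then show ?thesis by simp
qed

lemma continuous_on_swapped:
  fixes f :: "real^'n::finite \<Rightarrow> real \<Rightarrow> real"
  assumes "continuous_on (UNIV \<times> {0..}) (\<lambda>(x,t). f x t)" "U \<subseteq> {0..}"
  shows "continuous_on (U \<times> S) (\<lambda>p. f (snd p) (fst p))"
proof -
  have "continuous_on (U \<times> S) (\<lambda>p. (\<lambda>(x,t). f x t) (snd p, fst p))"
    by (rule continuous_on_compose2[OF assms(1)]) (use assms(2) in \<open>auto intro!: continuous_intros\<close>)
  then show ?thesis by simp
qed

(* Leibniz rule on the cube containing the support of the weight, for times in ball t (t/2). *)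
lemma has_real_derivative_weighted_energy:
  fixes h :: "real^'n::finite \<Rightarrow> real \<Rightarrow> real^'n^'n" and w :: "real^'n \<Rightarrow> real"
    and ht :: "'n \<Rightarrow> 'n \<Rightarrow> real^'n \<Rightarrow> real \<Rightarrow> real"
  assumes w_cont: "continuous_on UNIV w" and w_supp: "\<And>x. x \<notin> cube k \<Longrightarrow> w x = 0"
    and h_cont: "\<And>i j. continuous_on (UNIV \<times> {0..}) (\<lambda>(x,t). h x t $ i $ j)"
    and ht_cont: "\<And>i j. continuous_on (UNIV \<times> {0..}) (\<lambda>(x,t). ht i j x t)"
    and ht: "\<And>i j x s. 0 \<le> s \<Longrightarrow> ((\<lambda>s. h x s $ i $ j) has_real_derivative ht i j x s) (at s within {0..})"
    and t: "0 < t"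
  shows "((\<lambda>s. integral UNIV (\<lambda>x. w x * (norm (h x s))\<^sup>2)) has_real_derivative
     integral (cube k) (\<lambda>x. w x * (\<Sum>i\<in>UNIV. \<Sum>j\<in>UNIV. 2 * (h x t $ i $ j * ht i j x t)))) (at t)"
proof -
  let ?U = "ball t (t/2)"
  have U_pos: "0 < s" if "s \<in> ?U" for s
  proof -
    have "\<bar>t - s\<bar> < t / 2" using that by (simp add: dist_real_def)
    then show ?thesis by arith
  qed
  have integral_eq: "integral UNIV (\<lambda>x. w x * (norm (h x s))\<^sup>2)
      = integral (cube k) (\<lambda>x. w x * (\<Sum>i\<in>UNIV. \<Sum>j\<in>UNIV. (h x s $ i $ j)\<^sup>2))" for s
    unfolding power2_norm_matrix by (rule integral_eq_integral_UNIV[symmetric]) (simp add: w_supp)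
  have "((\<lambda>s. integral (cube k) (\<lambda>x. w x * (\<Sum>i\<in>UNIV. \<Sum>j\<in>UNIV. (h x s $ i $ j)\<^sup>2))) has_field_derivative
     integral (cube k) (\<lambda>x. w x * (\<Sum>i\<in>UNIV. \<Sum>j\<in>UNIV. 2 * (h x t $ i $ j * ht i j x t)))) (at t within ?U)"
    unfolding cube_def
  proof (rule leibniz_rule_field_derivative)
    fix s x assume s: "s \<in> ?U"
    have "((\<lambda>s. h x s $ i $ j) has_real_derivative ht i j x s) (at s)" for i j
      using ht[where s=s and i=i and j=j and x=x] U_pos[OF s] at_within_interior[of s "{0..}"] by simp
    then have "((\<lambda>s. w x * (\<Sum>i\<in>UNIV. \<Sum>j\<in>UNIV. (h x s $ i $ j)\<^sup>2)) has_real_derivative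
       w x * (\<Sum>i\<in>UNIV. \<Sum>j\<in>UNIV. 2 * (h x s $ i $ j * ht i j x s))) (at s)"
      by (intro DERIV_cmult DERIV_sum) (auto intro!: derivative_eq_intros)
    then show "((\<lambda>s. w x * (\<Sum>i\<in>UNIV. \<Sum>j\<in>UNIV. (h x s $ i $ j)\<^sup>2)) has_real_derivative
       w x * (\<Sum>i\<in>UNIV. \<Sum>j\<in>UNIV. 2 * (h x s $ i $ j * ht i j x s))) (at s within ?U)"
      by (rule has_field_derivative_at_within)
  next
    fix s assume "s \<in> ?U"
    then have h_slice: "continuous_on UNIV (\<lambda>x. h x s $ i $ j)" for i j
      using U_pos by (intro continuous_on_time_slice[OF h_cont]) (simp add: less_imp_le)
    have "continuous_on UNIV (\<lambda>x. w x * (\<Sum>i\<in>UNIV. \<Sum>j\<in>UNIV. (h x s $ i $ j)\<^sup>2))"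
      by (intro continuous_on_mult w_cont continuous_on_sum continuous_on_power h_slice)
    then show "(\<lambda>x. w x * (\<Sum>i\<in>UNIV. \<Sum>j\<in>UNIV. (h x s $ i $ j)\<^sup>2)) integrable_on cbox (\<chi> i. - k) (\<chi> i. k)"
      using integrable_continuous continuous_on_subset by blast
  next
    have U_sub: "?U \<subseteq> {0..}" using U_pos by (auto simp: less_imp_le)
    have "continuous_on (?U \<times> cbox (\<chi> i. - k) (\<chi> i. k)) (\<lambda>p. w (snd p))"
      by (rule continuous_on_compose2[OF w_cont]) (auto intro!: continuous_intros)
    then show "continuous_on (?U \<times> cbox (\<chi> i. - k) (\<chi> i. k))
       (\<lambda>(s, x). w x * (\<Sum>i\<in>UNIV. \<Sum>j\<in>UNIV. 2 * (h x s $ i $ j * ht i j x s)))"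
      unfolding split_beta
      by (intro continuous_intros continuous_on_swapped[OF h_cont U_sub] continuous_on_swapped[OF ht_cont U_sub])
  qed (use t in auto)
  then show ?thesis
    unfolding integral_eq using at_within_open[of t ?U] t by simp
qed

lemma metric_slice_if_C21:
  fixes h :: "real^'n::finite \<Rightarrow> real \<Rightarrow> real^'n^'n"
  assumes C21: "C21 h" and small: "\<And>x s. 0 \<le> s \<Longrightarrow> norm (h x s) \<le> B" "B \<le> 1/2" and t: "0 \<le> t"
  shows "metric_slice (\<lambda>y. h y t) B"
proof
  note C = C21[unfolded C21_def, rule_format]
  have Dh_eq: "Dh (\<lambda>y. h y t) a i j = (\<lambda>y. pd a (\<lambda>z. h z t $ i $ j) y)" for a i j
    by (rule ext) (simp add: Dh_def)
  fix a b i j y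
  show "norm (h y t) \<le> B" using small t by simp
  show "B \<le> 1/2" by (rule small(2))
  show "has_partial a (\<lambda>y. h y t $ i $ j) (Dh (\<lambda>y. h y t) a i j)"
    unfolding Dh_eq using C t by (intro has_partial_pd) auto
  show "has_partial b (Dh (\<lambda>y. h y t) a i j) (pd b (Dh (\<lambda>y. h y t) a i j))"
    unfolding Dh_eq using C t by (intro has_partial_pd) auto
  show "continuous_on UNIV (\<lambda>y. h y t $ i $ j)"
    using C t by (intro continuous_on_time_slice[where f="\<lambda>x t. h x t $ i $ j"]) auto
  show "continuous_on UNIV (Dh (\<lambda>y. h y t) a i j)"
    unfolding Dh_eq using C t by (intro continuous_on_time_slice) auto
  show "continuous_on UNIV (pd b (Dh (\<lambda>y. h y t) a i j))"
    unfolding Dh_eq using C t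
    by (intro continuous_on_time_slice[where f="\<lambda>x t. pd b (\<lambda>y. pd a (\<lambda>z. h z t $ i $ j) y) x"]) auto
qed

lemma C21_time_derivative:
  assumes "C21 h"
  obtains ht where "\<And>i j. continuous_on (UNIV \<times> {0..}) (\<lambda>(x,t). ht i j x t)"
    and "\<And>i j x t. 0 \<le> t \<Longrightarrow> ((\<lambda>s. h x s $ i $ j) has_real_derivative ht i j x t) (at t within {0..})"
proof -
  have "\<forall>i j. \<exists>ht. continuous_on (UNIV \<times> {0..}) (\<lambda>(x,t). ht x t) \<and>
      (\<forall>x. \<forall>t\<ge>0. ((\<lambda>s. h x s $ i $ j) has_real_derivative ht x t) (at t within {0..}))"
    using assms unfolding C21_def by blast
  then show ?thesis using that by metis
qed

lemma ricci_deturck_time_derivative: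
  assumes "ricci_deturck h" "0 < t"
    and "((\<lambda>s. h x s $ i $ j) has_real_derivative d) (at t within {0..})"
  shows "d = lap (\<lambda>y. h y t) i j x + Q0 (\<lambda>y. h y t) i j x + divQ1 (\<lambda>y. h y t) i j x"
proof -
  have "((\<lambda>s. h x s $ i $ j) has_real_derivative d) (at t)"
    using assms(2,3) at_within_interior[of t "{0..}"] by simp
  then have "deriv (\<lambda>s. h x s $ i $ j) t = d" by (rule DERIV_imp_deriv)
  moreover have "deriv (\<lambda>s. h x s $ i $ j) t - lap (\<lambda>y. h y t) i j x
      = Q0 (\<lambda>y. h y t) i j x + divQ1 (\<lambda>y. h y t) i j x"
    using assms(1,2) unfolding ricci_deturck_def by blast
  ultimately show ?thesis by linarith
qed

lemma (in cutoff_function) energy_inequality: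
  fixes h :: "real^'n \<Rightarrow> real \<Rightarrow> real^'n^'n"
  assumes M: "\<And>a z. \<bar>pd a \<phi> z\<bar> \<le> M" "0 \<le> M"
    and h: "C21 h" "ricci_deturck h"
    and small: "\<And>x s. 0 \<le> s \<Longrightarrow> norm (h x s) \<le> B" "B \<le> \<epsilon>" "\<epsilon> < 1/2"
    and R: "0 < R" and t: "0 < t"
  shows "\<exists>D. ((\<lambda>s. integral UNIV (\<lambda>x. etaR \<eta> R x * (norm (h x s))\<^sup>2)) has_real_derivative D) (at t) \<and>
     D / 2 \<le> (- 1/2 + energy_const (real CARD('n)) M * \<epsilon>) * integral UNIV (\<lambda>x. etaR \<eta> R x * grad_sq h t x)
       + energy_const (real CARD('n)) M / R\<^sup>2 * integral (ball 0 (2*R) - ball 0 R) (\<lambda>x. (norm (h x t))\<^sup>2)"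
proof -
  let ?H = "\<lambda>y. h y t"
  obtain ht where ht_cont: "\<And>i j. continuous_on (UNIV \<times> {0..}) (\<lambda>(x,t). ht i j x t)"
    and ht: "\<And>i j x s. 0 \<le> s \<Longrightarrow> ((\<lambda>s. h x s $ i $ j) has_real_derivative ht i j x s) (at s within {0..})"
    using C21_time_derivative[OF h(1)] by blast
  interpret energy_estimate c \<eta> ?H B R M \<epsilon>
    using metric_slice_if_C21[OF h(1) small(1)] small(2,3) t R M
    by (intro energy_estimate.intro cutoff_function_axioms energy_estimate_axioms.intro) auto
  define D where "D = integral (cube (2*R+1))
    (\<lambda>x. etaR \<eta> R x * (\<Sum>i\<in>UNIV. \<Sum>j\<in>UNIV. 2 * (h x t $ i $ j * ht i j x t)))"
  have der: "((\<lambda>s. integral UNIV (\<lambda>x. etaR \<eta> R x * (norm (h x s))\<^sup>2)) has_real_derivative D) (at t)"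
    unfolding D_def using h(1) unfolding C21_def
    by (intro has_real_derivative_weighted_energy continuous_on_etaR etaR_eq_0_outside_cube R ht_cont ht t) auto
  have "ht i j x t = lap ?H i j x + Q0 ?H i j x + divQ1 ?H i j x" for i j x
    using ricci_deturck_time_derivative[OF h(2) t ht] t by simp
  then have "D = integral (cube (2*R+1)) (\<lambda>x. 2 * (etaR \<eta> R x *
      (\<Sum>i\<in>UNIV. \<Sum>j\<in>UNIV. h x t $ i $ j * (lap ?H i j x + Q0 ?H i j x + divQ1 ?H i j x))))"
    unfolding D_def by (simp add: sum_distrib_left mult_ac)
  then have D_half: "D / 2 = integral (cube (2*R+1)) (\<lambda>x. etaR \<eta> R x *
      (\<Sum>i\<in>UNIV. \<Sum>j\<in>UNIV. h x t $ i $ j * (lap ?H i j x + Q0 ?H i j x + divQ1 ?H i j x)))"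
    by (simp add: integral_mult_right)
  have grad_eq: "grad_sq h t = grad_sq_slice ?H"
    unfolding grad_sq_def grad_sq_slice_def ..
  show ?thesis
    using der energy_slice_estimate unfolding D_half[symmetric] grad_eq by blast
qed

theorem lemma5p7:
  fixes \<eta> :: "real^'n::finite \<Rightarrow> real" and c :: real
  assumes "cutoff c \<eta>"
  shows "\<exists>C3>0. \<forall>(\<epsilon>::real) (h :: real^'n \<Rightarrow> real \<Rightarrow> real^'n^'n).
     0 < \<epsilon> \<and> \<epsilon> < 1/2 \<and> C21 h \<and> symmetric_field h \<and> ricci_deturck h \<and>
     (\<exists>B<\<epsilon>. \<forall>x. \<forall>t\<ge>0. norm (h x t) \<le> B) \<longrightarrow>
     (\<forall>R>0. \<forall>t>0. \<exists>D.
        ((\<lambda>s. integral UNIV (\<lambda>x. etaR \<eta> R x * (norm (h x s))\<^sup>2)) has_real_derivative D) (at t) \<and>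
        D / 2 \<le> (- 1/2 + C3 * \<epsilon>) * integral UNIV (\<lambda>x. etaR \<eta> R x * grad_sq h t x)
               + C3 / R\<^sup>2 * integral (ball 0 (2*R) - ball 0 R) (\<lambda>x. (norm (h x t))\<^sup>2))"
proof -
  interpret cutoff_function c \<eta> using assms by unfold_locales
  obtain M where M: "\<And>a z. \<bar>pd a \<phi> z\<bar> \<le> M" "0 \<le> M"
    using pd_phi_bounded by blast
  have pos: "0 < energy_const (real CARD('n)) M"
    by (simp add: energy_const_pos)
  show ?thesis
  proof (rule exI[of _ "energy_const (real CARD('n)) M"], intro conjI allI impI pos)
    fix \<epsilon> :: real and h :: "real^'n \<Rightarrow> real \<Rightarrow> real^'n^'n" and R t :: real
    assume hyp: "0 < \<epsilon> \<and> \<epsilon> < 1/2 \<and> C21 h \<and> symmetric_field h \<and> ricci_deturck h \<and>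
      (\<exists>B<\<epsilon>. \<forall>x. \<forall>t\<ge>0. norm (h x t) \<le> B)" and "0 < R" "0 < t"
    then obtain B where "B < \<epsilon>" "\<And>x s. 0 \<le> s \<Longrightarrow> norm (h x s) \<le> B"
      by blast
    then show "\<exists>D. ((\<lambda>s. integral UNIV (\<lambda>x. etaR \<eta> R x * (norm (h x s))\<^sup>2)) has_real_derivative D) (at t) \<and>
        D / 2 \<le> (- 1/2 + energy_const (real CARD('n)) M * \<epsilon>) * integral UNIV (\<lambda>x. etaR \<eta> R x * grad_sq h t x)
          + energy_const (real CARD('n)) M / R\<^sup>2 * integral (ball 0 (2*R) - ball 0 R) (\<lambda>x. (norm (h x t))\<^sup>2)"
      using hyp \<open>0 < R\<close> \<open>0 < t\<close> by (intro energy_inequality[OF M]) auto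
  qed
qed
end
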